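(* Fix $n\in\mathbb N$ and $x\in\mathbb P^d_K(\mathbb C_p)$, and let $C=\{U\in T_{O_K/\pi^n}(\Lambda^{(n)}):x\in Y_U\}$ with the induced order. If $C$ is nonempty, its order complex $C^\bullet$ is contractible.
   Context: $K$ finite over $\mathbb Q_p$, $O_K$, uniformizer $\pi$, $O$ the integers of $\mathbb C_p$, $\Lambda=\bigoplus_{i=0}^dO_Ke_i$, $\Lambda^{(n)}=\Lambda/\pi^n\Lambda$. For an $O_K/\pi^n$-submodule $U\subset\Lambda^{(n)}$ let $\mathrm{rk}(U)=\dim_{O_K/\pi}(U+\pi\Lambda^{(n)})/\pi\Lambda^{(n)}$ and $\mathrm{rk}'(U)$ the minimal number of generators. $T_{O_K/\pi^n}(\Lambda^{(n)})$ is the poset under inclusion of submodules $U$ with $\mathrm{rk}(U)\ge1$ and $\mathrm{rk}'(U)\le d$. For $x$ with line $L_x\subset\mathbb C_p^{d+1}$, $\mathrm{red}_n(x)=(L_x\cap(\Lambda\otimes O))\otimes O/\pi^nO$, and $Y_U=\{x:\mathrm{red}_n(x)\subset U\otimes_{O_K/\pi^n}O/\pi^nO\}$. The order complex of a poset has chains $x_0\prec\cdots\prec x_m$ as $m$-simplices. *)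

theory Defs
  imports "HOL-Analysis.Analysis" "HOL-Computational_Algebra.Polynomial" "HOL-Library.Function_Algebras"
begin

definition nonarch_abs :: "('c::field \<Rightarrow> real) \<Rightarrow> bool" where
  "nonarch_abs av \<longleftrightarrow> (\<forall>x. 0 \<le> av x) \<and> (\<forall>x. av x = 0 \<longleftrightarrow> x = 0)
     \<and> (\<forall>x y. av (x * y) = av x * av y) \<and> (\<forall>x y. av (x + y) \<le> max (av x) (av y))"

definition complete_wrt :: "('c::field \<Rightarrow> real) \<Rightarrow> 'c set \<Rightarrow> bool" where
  "complete_wrt av S \<longleftrightarrow>
     (\<forall>f::nat \<Rightarrow> 'c. (\<forall>m. f m \<in> S) \<and> (\<forall>e>0. \<exists>N. \<forall>m\<ge>N. \<forall>k\<ge>N. av (f m - f k) < e)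
        \<longrightarrow> (\<exists>l\<in>S. \<forall>e>0. \<exists>N. \<forall>m\<ge>N. av (f m - l) < e))"

definition field_hom :: "('k::field \<Rightarrow> 'c::field) \<Rightarrow> bool" where
  "field_hom \<iota> \<longleftrightarrow> \<iota> 1 = 1 \<and> (\<forall>x y. \<iota> (x + y) = \<iota> x + \<iota> y) \<and> (\<forall>x y. \<iota> (x * y) = \<iota> x * \<iota> y)"

text \<open>K (embedded into C via \<iota>, with absolute value av restricted along \<iota>) is a finite
  extension of Q_p: a field of characteristic 0 (type class), complete for a discrete
  non-archimedean absolute value with uniformizer piK, and with finite residue field.\<close>
definition p_adic_local_field :: "('k::field_char_0 \<Rightarrow> 'c::field) \<Rightarrow> ('c \<Rightarrow> real) \<Rightarrow> 'k \<Rightarrow> bool" where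
  "p_adic_local_field \<iota> av piK \<longleftrightarrow>
     complete_wrt av (range \<iota>)
     \<and> 0 < av (\<iota> piK) \<and> av (\<iota> piK) < 1
     \<and> (\<forall>x. x \<noteq> 0 \<longrightarrow> (\<exists>k::int. av (\<iota> x) = av (\<iota> piK) powi k))
     \<and> (\<exists>R. finite R \<and> (\<forall>r\<in>R. av (\<iota> r) \<le> 1)
            \<and> (\<forall>x. av (\<iota> x) \<le> 1 \<longrightarrow> (\<exists>r\<in>R. av (\<iota> (x - r)) < 1)))"

definition algebraic_over :: "('k::field \<Rightarrow> 'c::field) \<Rightarrow> 'c \<Rightarrow> bool" where
  "algebraic_over \<iota> y \<longleftrightarrow> (\<exists>q::'k poly. q \<noteq> 0 \<and> poly (map_poly \<iota> q) y = 0)"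

text \<open>C is (a copy of) C_p: complete, algebraically closed, and the algebraic closure of K
  inside C is dense (so C is the completion of an algebraic closure of K).\<close>
definition is_Cp :: "('k::field \<Rightarrow> 'c::field) \<Rightarrow> ('c \<Rightarrow> real) \<Rightarrow> bool" where
  "is_Cp \<iota> av \<longleftrightarrow> complete_wrt av UNIV
     \<and> (\<forall>q::'c poly. degree q > 0 \<longrightarrow> (\<exists>z. poly q z = 0))
     \<and> (\<forall>z e. e > 0 \<longrightarrow> (\<exists>y. algebraic_over \<iota> y \<and> av (z - y) < e))"

text \<open>Lambda = O_K^(d+1), vectors indexed by 0..d (zero beyond d).\<close>
definition Lam :: "('k::field \<Rightarrow> 'c::field) \<Rightarrow> ('c \<Rightarrow> real) \<Rightarrow> nat \<Rightarrow> (nat \<Rightarrow> 'k) set" where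
  "Lam \<iota> av d = {v. (\<forall>i. av (\<iota> (v i)) \<le> 1) \<and> (\<forall>i>d. v i = 0)}"

definition piLam :: "('k::field \<Rightarrow> 'c::field) \<Rightarrow> ('c \<Rightarrow> real) \<Rightarrow> 'k \<Rightarrow> nat \<Rightarrow> nat \<Rightarrow> (nat \<Rightarrow> 'k) set" where
  "piLam \<iota> av piK d m = {(\<lambda>i. piK ^ m * v i) | v. v \<in> Lam \<iota> av d}"

definition OK_span :: "('k::field \<Rightarrow> 'c::field) \<Rightarrow> ('c \<Rightarrow> real) \<Rightarrow> (nat \<Rightarrow> 'k) set \<Rightarrow> (nat \<Rightarrow> 'k) set" where
  "OK_span \<iota> av S = {(\<Sum>s\<in>F. (\<lambda>i. c s * s i)) | F c. finite F \<and> F \<subseteq> S \<and> (\<forall>s\<in>F. av (\<iota> (c s)) \<le> 1)}"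

text \<open>An O_K/pi^n-submodule U of Lambda^(n) is represented by its preimage M in Lambda,
  i.e. an O_K-submodule M with pi^n Lambda \<subseteq> M \<subseteq> Lambda.\<close>
definition lattice_mod :: "('k::field \<Rightarrow> 'c::field) \<Rightarrow> ('c \<Rightarrow> real) \<Rightarrow> 'k \<Rightarrow> nat \<Rightarrow> nat \<Rightarrow> (nat \<Rightarrow> 'k) set \<Rightarrow> bool" where
  "lattice_mod \<iota> av piK d n M \<longleftrightarrow> M \<subseteq> Lam \<iota> av d \<and> piLam \<iota> av piK d n \<subseteq> M
     \<and> 0 \<in> M \<and> (\<forall>u\<in>M. \<forall>v\<in>M. u + v \<in> M)
     \<and> (\<forall>c u. av (\<iota> c) \<le> 1 \<longrightarrow> u \<in> M \<longrightarrow> (\<lambda>i. c * u i) \<in> M)"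

text \<open>Linear independence over the residue field O_K/pi of the reductions of a family S.\<close>
definition red_indep :: "('k::field \<Rightarrow> 'c::field) \<Rightarrow> ('c \<Rightarrow> real) \<Rightarrow> 'k \<Rightarrow> nat \<Rightarrow> (nat \<Rightarrow> 'k) set \<Rightarrow> bool" where
  "red_indep \<iota> av piK d S \<longleftrightarrow>
     (\<forall>c. (\<forall>s\<in>S. av (\<iota> (c s)) \<le> 1) \<longrightarrow> (\<Sum>s\<in>S. (\<lambda>i. c s * s i)) \<in> piLam \<iota> av piK d 1
        \<longrightarrow> (\<forall>s\<in>S. av (\<iota> (c s)) < 1))"

text \<open>rk(U) = dim over O_K/pi of (U + pi Lambda^(n))/pi Lambda^(n).\<close>
definition rk :: "('k::field \<Rightarrow> 'c::field) \<Rightarrow> ('c \<Rightarrow> real) \<Rightarrow> 'k \<Rightarrow> nat \<Rightarrow> (nat \<Rightarrow> 'k) set \<Rightarrow> nat" where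
  "rk \<iota> av piK d M = Max {card S | S. finite S \<and> S \<subseteq> M \<and> red_indep \<iota> av piK d S}"

definition rk' :: "('k::field \<Rightarrow> 'c::field) \<Rightarrow> ('c \<Rightarrow> real) \<Rightarrow> 'k \<Rightarrow> nat \<Rightarrow> nat \<Rightarrow> (nat \<Rightarrow> 'k) set \<Rightarrow> nat" where
  "rk' \<iota> av piK d n M = (LEAST r. \<exists>S. finite S \<and> S \<subseteq> M \<and> card S = r \<and>
       M = {u + w | u w. u \<in> OK_span \<iota> av S \<and> w \<in> piLam \<iota> av piK d n})"

definition Tpos :: "('k::field \<Rightarrow> 'c::field) \<Rightarrow> ('c \<Rightarrow> real) \<Rightarrow> 'k \<Rightarrow> nat \<Rightarrow> nat \<Rightarrow> (nat \<Rightarrow> 'k) set set" where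
  "Tpos \<iota> av piK d n = {M. lattice_mod \<iota> av piK d n M \<and> rk \<iota> av piK d M \<ge> 1 \<and> rk' \<iota> av piK d n M \<le> d}"

text \<open>O-span inside O^(d+1) (O = integers of C_p) of the image of M; this is the
  preimage in O^(d+1) of U \<otimes> O/pi^n O (together with pi^n O^(d+1) \<subseteq> it).\<close>
definition O_span :: "('k::field \<Rightarrow> 'c::field) \<Rightarrow> ('c \<Rightarrow> real) \<Rightarrow> (nat \<Rightarrow> 'k) set \<Rightarrow> (nat \<Rightarrow> 'c) set" where
  "O_span \<iota> av M = {(\<Sum>s\<in>F. (\<lambda>i. c s * \<iota> (s i))) | F c. finite F \<and> F \<subseteq> M \<and> (\<forall>s\<in>F. av (c s) \<le> 1)}"

text \<open>x \<in> Y_U: every element of L_x \<inter> O^(d+1) reduces mod pi^n into U \<otimes> O/pi^n O.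
  x is a nonzero representative vector of the point of P^d.\<close>
definition in_Y :: "('k::field \<Rightarrow> 'c::field) \<Rightarrow> ('c \<Rightarrow> real) \<Rightarrow> 'k \<Rightarrow> nat \<Rightarrow> (nat \<Rightarrow> 'c) \<Rightarrow> (nat \<Rightarrow> 'k) set \<Rightarrow> bool" where
  "in_Y \<iota> av piK n x M \<longleftrightarrow>
     (\<forall>l. (\<forall>i. av (l * x i) \<le> 1) \<longrightarrow>
        (\<exists>w\<in>O_span \<iota> av M. \<forall>i. av (l * x i - w i) \<le> av (\<iota> piK) ^ n))"

text \<open>Points: convex combinations (barycentric coordinates) supported on a nonempty chain.\<close>
definition order_complex_set :: "'a set set \<Rightarrow> ('a set \<Rightarrow> real) set" where
  "order_complex_set P = {f. f \<in> extensional P \<and> (\<forall>U\<in>P. 0 \<le> f U) \<and> sum f P = 1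
      \<and> (\<forall>U\<in>P. \<forall>V\<in>P. f U \<noteq> 0 \<and> f V \<noteq> 0 \<longrightarrow> U \<subseteq> V \<or> V \<subseteq> U)}"

definition order_complex_top :: "'a set set \<Rightarrow> ('a set \<Rightarrow> real) topology" where
  "order_complex_top P = subtopology (product_topology (\<lambda>_. euclideanreal) P) (order_complex_set P)"

end

theory Submission
  imports Defs "HOL-Library.Set_Algebras"
begin

text \<open>The poset \<open>C\<close> is closed under binary intersections. Hence, when finite, it has a least
  element \<open>\<Inter>C\<close>, and the straight-line homotopy to that vertex contracts the order complex.
  (When \<open>C\<close> is infinite the order complex as defined is empty, since a sum over an infinite set
  is \<open>0\<close>.)

  Closure under intersections has three parts.
  \<^item> \<open>x \<in> Y\<^sub>U \<inter> Y\<^sub>V\<close> implies \<open>x \<in> Y\<^bsub>U \<inter> V\<^esub>\<close>: this is flatness of \<open>O\<close> over \<open>O_K\<close>,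
    \<open>(U \<otimes> O) \<inter> (V \<otimes> O) = (U \<inter> V) \<otimes> O\<close>. It is proved by lattice duality: a lattice in
    \<open>K\<^sup>d\<^sup>+\<^sup>1\<close> has a triangular basis, so it equals its double dual, the dual of \<open>U \<inter> V\<close> is the
    sum of the duals, and a vector of \<open>C\<^sub>p\<^sup>d\<^sup>+\<^sup>1\<close> lies in the \<open>O\<close>-span of a lattice as soon as it
    pairs integrally with the dual lattice.
  \<^item> \<open>rk' \<le> d\<close> passes to submodules: over the discrete valuation ring \<open>O_K\<close>, a submodule of
    a module generated by \<open>r\<close> elements is generated by \<open>r\<close> elements.
  \<^item> \<open>rk \<ge> 1\<close>: after scaling \<open>x\<close> so that its largest coordinate is \<open>1\<close>, its reduction
    provides an element of \<open>U \<inter> V\<close> outside \<open>\<pi>\<Lambda>\<close>.\<close>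

lemma nonarch_absD:
  assumes "nonarch_abs w"
  shows nonarch_abs_nonneg: "0 \<le> w x" and nonarch_abs_eq_0_iff: "w x = 0 \<longleftrightarrow> x = 0"
    and nonarch_abs_mult: "w (x * y) = w x * w y"
    and nonarch_abs_add: "w (x + y) \<le> max (w x) (w y)"
  using assms unfolding nonarch_abs_def by auto

lemma nonarch_abs_0: "nonarch_abs w \<Longrightarrow> w 0 = 0"
  using nonarch_abs_eq_0_iff by blast

lemma nonarch_abs_pos: "nonarch_abs w \<Longrightarrow> x \<noteq> 0 \<Longrightarrow> 0 < w x"
  using nonarch_abs_eq_0_iff nonarch_abs_nonneg by (metis less_eq_real_def)

lemma nonarch_abs_1: assumes "nonarch_abs w" shows "w 1 = 1"
  using nonarch_abs_mult[OF assms, of 1 1] nonarch_abs_pos[OF assms, of 1] by simp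

lemma nonarch_abs_minus_1: assumes "nonarch_abs w" shows "w (-1) = 1"
proof -
  have "w (-1) ^ 2 = 1"
    using nonarch_abs_mult[OF assms, of "-1" "-1"] nonarch_abs_1[OF assms] by (simp add: power2_eq_square)
  thus ?thesis using nonarch_abs_nonneg[OF assms, of "-1"] power2_eq_1_iff by force
qed

lemma nonarch_abs_minus: "nonarch_abs w \<Longrightarrow> w (- x) = w x"
  using nonarch_abs_mult[of w "-1" x] nonarch_abs_minus_1[of w] by simp

lemma nonarch_abs_diff: "nonarch_abs w \<Longrightarrow> w (x - y) \<le> max (w x) (w y)"
  using nonarch_abs_add[of w x "-y"] nonarch_abs_minus[of w y] by simp

lemma nonarch_abs_inverse: assumes "nonarch_abs w" shows "w (inverse x) = inverse (w x)"
proof (cases "x = 0")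
  case True thus ?thesis using nonarch_abs_0[OF assms] by simp
next
  case False
  hence "w x * w (inverse x) = 1"
    using nonarch_abs_mult[OF assms, of x "inverse x"] nonarch_abs_1[OF assms] by simp
  thus ?thesis by (metis inverse_unique)
qed

lemma nonarch_abs_divide: "nonarch_abs w \<Longrightarrow> w (x / y) = w x / w y"
  using nonarch_abs_mult[of w x "inverse y"] nonarch_abs_inverse[of w y] by (simp add: divide_inverse)

lemma nonarch_abs_power: "nonarch_abs w \<Longrightarrow> w (x ^ k) = w x ^ k"
  by (induction k) (simp_all add: nonarch_abs_1 nonarch_abs_mult)

lemma nonarch_abs_add_le: "nonarch_abs w \<Longrightarrow> w x \<le> B \<Longrightarrow> w y \<le> B \<Longrightarrow> w (x + y) \<le> B"
  using nonarch_abs_add[of w x y] by simp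

lemma nonarch_abs_sum_le:
  assumes "nonarch_abs w" "0 \<le> B" "\<forall>s\<in>F. w (f s) \<le> B"
  shows "w (sum f F) \<le> B"
  using assms(3)
  by (induction F rule: infinite_finite_induct)
     (simp_all add: nonarch_abs_0[OF assms(1)] assms(2) nonarch_abs_add_le[OF assms(1)])

lemma field_homD:
  assumes "field_hom j"
  shows field_hom_1: "j 1 = 1" and field_hom_add: "j (x + y) = j x + j y"
    and field_hom_mult: "j (x * y) = j x * j y"
  using assms unfolding field_hom_def by auto

lemma field_hom_0: "field_hom j \<Longrightarrow> j 0 = 0"
  using field_hom_add[of j 0 0] by (metis add_cancel_right_right)

lemma field_hom_sum: "field_hom j \<Longrightarrow> j (sum f F) = (\<Sum>s\<in>F. j (f s))"
  by (induction F rule: infinite_finite_induct) (simp_all add: field_hom_0 field_hom_add)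

lemma field_hom_eq_0_iff: assumes "field_hom j" shows "j x = 0 \<longleftrightarrow> x = 0"
proof
  assume "j x = 0"
  show "x = 0"
  proof (rule ccontr)
    assume "x \<noteq> 0"
    hence "j x * j (inverse x) = 1" using field_hom_mult[OF assms, of x "inverse x"] field_hom_1[OF assms] by simp
    thus False using \<open>j x = 0\<close> by simp
  qed
qed (simp add: field_hom_0[OF assms])

lemma field_hom_id: "field_hom id"
  by (simp add: field_hom_def)

lemma nonarch_abs_comp_field_hom: "nonarch_abs w \<Longrightarrow> field_hom j \<Longrightarrow> nonarch_abs (\<lambda>x. w (j x))"
  unfolding nonarch_abs_def by (auto simp: field_hom_eq_0_iff field_hom_mult field_hom_add)

lemma sum_fun_apply: "(sum f A) x = (\<Sum>a\<in>A. f a x)"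
  by (induction A rule: infinite_finite_induct) simp_all

section \<open>Triangular linear systems\<close>

lemma lower_triangular_solvable:
  fixes A :: "nat \<Rightarrow> nat \<Rightarrow> 'f::field"
  assumes diag: "\<forall>i\<le>d. A i i \<noteq> 0" and lower: "\<forall>i\<le>d. \<forall>k\<le>d. i < k \<longrightarrow> A i k = 0"
  shows "\<exists>x. \<forall>i\<le>d. (\<Sum>k\<le>d. A i k * x k) = r i"
proof -
  have "\<exists>x. \<forall>i<m. (\<Sum>k<m. A i k * x k) = r i" if "m \<le> Suc d" for m
    using that
  proof (induction m)
    case 0 thus ?case by simp
  next
    case (Suc m)
    then obtain x where x: "\<forall>i<m. (\<Sum>k<m. A i k * x k) = r i" by auto
    have m: "m \<le> d" using Suc by simp
    define x' where "x' = x(m := (r m - (\<Sum>k<m. A m k * x k)) / A m m)"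
    have same: "(\<Sum>k<m. A i k * x' k) = (\<Sum>k<m. A i k * x k)" for i
      unfolding x'_def by (intro sum.cong) auto
    have "(\<Sum>k<Suc m. A i k * x' k) = r i" if "i < Suc m" for i
    proof (cases "i < m")
      case True
      hence "A i m = 0" using lower m by auto
      thus ?thesis using x same True by simp
    next
      case False
      hence "i = m" using that by simp
      have "(\<Sum>k<Suc m. A i k * x' k) = (\<Sum>k<m. A m k * x k) + A m m * x' m"
        using same \<open>i = m\<close> by simp
      also have "A m m * x' m = r m - (\<Sum>k<m. A m k * x k)" unfolding x'_def using diag m by simp
      finally show ?thesis using \<open>i = m\<close> by simp
    qed
    thus ?case by blast
  qed
  from this[of "Suc d"] show ?thesis by (simp add: lessThan_Suc_atMost less_Suc_eq_le)
qed

lemma upper_triangular_solvable: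
  fixes A :: "nat \<Rightarrow> nat \<Rightarrow> 'f::field"
  assumes diag: "\<forall>i\<le>d. A i i \<noteq> 0" and upper: "\<forall>i\<le>d. \<forall>k\<le>d. k < i \<longrightarrow> A i k = 0"
  shows "\<exists>x. \<forall>i\<le>d. (\<Sum>k\<le>d. A i k * x k) = r i"
proof -
  define A' where "A' = (\<lambda>i k. A (d - i) (d - k))"
  have "\<forall>i\<le>d. A' i i \<noteq> 0"
    unfolding A'_def using diag by simp
  moreover have "\<forall>i\<le>d. \<forall>k\<le>d. i < k \<longrightarrow> A' i k = 0"
    unfolding A'_def using upper by (simp add: diff_less_mono2)
  ultimately
  obtain x' where x': "\<forall>i\<le>d. (\<Sum>k\<le>d. A' i k * x' k) = r (d - i)"
    using lower_triangular_solvable[of d A' "\<lambda>i. r (d - i)"] by blast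
  have "(\<Sum>k\<le>d. A i k * x' (d - k)) = r i" if i: "i \<le> d" for i
  proof -
    have "(\<Sum>k\<le>d. A i k * x' (d - k)) = (\<Sum>k\<le>d. A' (d - i) k * x' k)"
      by (rule sum.reindex_bij_witness[of _ "\<lambda>k. d - k" "\<lambda>k. d - k"]) (use i in \<open>auto simp: A'_def\<close>)
    also have "\<dots> = r i" using x' i by (metis diff_diff_cancel diff_le_self)
    finally show ?thesis .
  qed
  thus ?thesis by (intro exI[of _ "\<lambda>k. x' (d - k)"]) blast
qed

section \<open>Order complexes with a least element\<close>

lemma contractible_order_complex_infinite:
  assumes "infinite P"
  shows "contractible_space (order_complex_top P)"
proof -
  have "order_complex_set P = {}" using assms by (auto simp: order_complex_set_def)
  hence "order_complex_top P = trivial_topology"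
    unfolding order_complex_top_def by (simp add: subtopology_eq_discrete_topology_empty)
  thus ?thesis by simp
qed

lemma topspace_order_complex_top: "topspace (order_complex_top P) = order_complex_set P"
  unfolding order_complex_top_def
  by (auto simp: order_complex_set_def topspace_subtopology PiE_iff extensional_def)

lemma order_complex_segment_to_least:
  assumes fin: "finite P" and m: "m \<in> P" "\<forall>U\<in>P. m \<subseteq> U"
    and f: "f \<in> order_complex_set P" and t: "0 \<le> t" "t \<le> 1"
  shows "restrict (\<lambda>U. (1 - t) * f U + t * (if U = m then 1 else 0)) P \<in> order_complex_set P"
    (is "?g \<in> _")
proof -
  have f0: "\<forall>U\<in>P. 0 \<le> f U" and f1: "sum f P = 1"
    and chain: "\<forall>U\<in>P. \<forall>V\<in>P. f U \<noteq> 0 \<and> f V \<noteq> 0 \<longrightarrow> U \<subseteq> V \<or> V \<subseteq> U"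
    using f by (auto simp: order_complex_set_def)
  have "sum ?g P = (1 - t) * sum f P + t * (\<Sum>U\<in>P. if U = m then 1 else 0)"
    by (simp add: sum.distrib sum_distrib_left)
  also have "\<dots> = 1" using f1 fin m(1) by simp
  finally have "sum ?g P = 1" .
  moreover have "\<forall>U\<in>P. 0 \<le> ?g U" using f0 t by auto
  moreover have "U \<subseteq> V \<or> V \<subseteq> U" if "U \<in> P" "V \<in> P" "?g U \<noteq> 0" "?g V \<noteq> 0" for U V
  proof -
    have "U = m \<or> f U \<noteq> 0" "V = m \<or> f V \<noteq> 0" using that by (auto split: if_splits)
    thus ?thesis using chain m(2) that(1,2) by blast
  qed
  ultimately show ?thesis unfolding order_complex_set_def by auto
qed

lemma contractible_order_complex_least:
  assumes fin: "finite P" and m: "m \<in> P" "\<forall>U\<in>P. m \<subseteq> U"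
  shows "contractible_space (order_complex_top P)"
proof -
  let ?X = "order_complex_top P" and ?Y = "product_topology (\<lambda>_. euclideanreal) P"
  define a where "a = restrict (\<lambda>U. if U = m then 1 else (0::real)) P"
  define h where "h = (\<lambda>(t::real, f). restrict (\<lambda>U. (1 - t) * f U + t * a U) P)"
  have h_in: "h (t, f) \<in> order_complex_set P" if "t \<in> {0..1}" "f \<in> order_complex_set P" for t f
    using order_complex_segment_to_least[OF fin m that(2)] that(1)
    by (simp add: h_def a_def cong: restrict_cong)
  have "continuous_map (prod_topology (top_of_set {0..1}) ?X) ?Y h"
    unfolding continuous_map_componentwise
  proof (intro conjI ballI)
    show "h ` topspace (prod_topology (top_of_set {0..1}) ?X) \<subseteq> extensional P"
      by (auto simp: h_def)
    fix U assume "U \<in> P"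
    hence "(\<lambda>z. h z U) = (\<lambda>z. (1 - fst z) * snd z U + fst z * a U)" by (auto simp: h_def fun_eq_iff)
    moreover have "continuous_map ?X euclideanreal (\<lambda>f. f U)"
      unfolding order_complex_top_def
      by (intro continuous_map_from_subtopology continuous_map_product_projection \<open>U \<in> P\<close>)
    ultimately show "continuous_map (prod_topology (top_of_set {0..1}) ?X) euclideanreal (\<lambda>z. h z U)"
      by (auto intro!: continuous_intros continuous_map_compose[OF continuous_map_snd, unfolded o_def]
          continuous_map_into_fulltopology[OF continuous_map_fst])
  qed
  hence "continuous_map (prod_topology (top_of_set {0..1}) ?X) ?X h"
    unfolding order_complex_top_def using h_in
    by (intro continuous_map_into_subtopology)
       (auto simp: topspace_order_complex_top[unfolded order_complex_top_def])
  moreover have "h (0, f) = id f" "h (1, f) = a" if "f \<in> topspace ?X" for f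
  proof -
    have "f \<in> extensional P" using that by (simp add: topspace_order_complex_top order_complex_set_def)
    thus "h (0, f) = id f" "h (1, f) = a" by (auto simp: h_def a_def restrict_def extensional_def)
  qed
  ultimately have "homotopic_with (\<lambda>x. True) ?X ?X id (\<lambda>x. a)"
    by (subst homotopic_with) auto
  thus ?thesis unfolding contractible_space_def by blast
qed

section \<open>Lattices in \<open>K\<^sup>d\<^sup>+\<^sup>1\<close> and their duals\<close>

locale local_field_lattices =
  fixes \<iota> :: "'k::field_char_0 \<Rightarrow> 'c::field" and av :: "'c \<Rightarrow> real" and piK :: 'k and d :: nat
  assumes nonarch_av: "nonarch_abs av" and field_hom_\<iota>: "field_hom \<iota>"
    and local_field: "p_adic_local_field \<iota> av piK"
begin

definition absK :: "'k \<Rightarrow> real" where "absK x = av (\<iota> x)"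

abbreviation q :: real where "q \<equiv> absK piK"

lemma nonarch_absK: "nonarch_abs absK"
  unfolding absK_def by (rule nonarch_abs_comp_field_hom[OF nonarch_av field_hom_\<iota>])

lemma absK_0 [simp]: "absK 0 = 0"
  and absK_1 [simp]: "absK 1 = 1"
  and absK_nonneg [simp]: "0 \<le> absK x"
  and absK_mult: "absK (x * y) = absK x * absK y"
  and absK_minus [simp]: "absK (- x) = absK x"
  and absK_divide: "absK (x / y) = absK x / absK y"
  and absK_power: "absK (x ^ k) = absK x ^ k"
  using nonarch_absK
  by (simp_all add: nonarch_abs_0 nonarch_abs_1 nonarch_abs_nonneg nonarch_abs_mult nonarch_abs_minus
      nonarch_abs_divide nonarch_abs_power)

lemma absK_add_le: "absK x \<le> B \<Longrightarrow> absK y \<le> B \<Longrightarrow> absK (x + y) \<le> B"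
  by (rule nonarch_abs_add_le[OF nonarch_absK])

lemma absK_mult_le_1: "absK x \<le> 1 \<Longrightarrow> absK y \<le> 1 \<Longrightarrow> absK (x * y) \<le> 1"
  by (simp add: absK_mult mult_le_one)

lemma q_pos: "0 < q" and q_less_1: "q < 1"
  using local_field unfolding p_adic_local_field_def absK_def by auto

lemma absK_discrete: "x \<noteq> 0 \<Longrightarrow> \<exists>k::int. absK x = q powi k"
  using local_field unfolding p_adic_local_field_def absK_def by auto

lemma piK_nonzero: "piK \<noteq> 0"
  using q_pos by auto

lemma absK_less_1_imp_le_q:
  assumes "absK x < 1" shows "absK x \<le> q"
proof (cases "x = 0")
  case True thus ?thesis using q_pos by simp
next
  case False
  then obtain k where k: "absK x = q powi k" using absK_discrete by blast
  have "\<not> k \<le> 0"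
  proof
    assume "k \<le> 0"
    hence "q powi 0 \<le> q powi k" using power_int_decreasing[of k 0 q] q_pos q_less_1 by simp
    thus False using k assms by simp
  qed
  hence "q powi k \<le> q powi 1" using power_int_decreasing[of 1 k q] q_pos q_less_1 by simp
  thus ?thesis using k by simp
qed

lemma exists_max_absK:
  assumes x0: "x0 \<in> I" "x0 \<noteq> 0" and bounded: "\<forall>x\<in>I. absK x \<le> B"
  obtains a where "a \<in> I" "a \<noteq> 0" "\<forall>x\<in>I. absK x \<le> absK a"
proof -
  define E where "E = {k::int. \<exists>x\<in>I. x \<noteq> 0 \<and> absK x = q powi k}"
  obtain k0 where k0: "k0 \<in> E" using absK_discrete x0 unfolding E_def by blast
  obtain N :: nat where N: "B < inverse q ^ N"
    using real_arch_pow[of "inverse q"] q_pos q_less_1 by (auto simp: one_less_inverse)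
  have lower: "- int N \<le> k" if k: "k \<in> E" for k
  proof (rule ccontr)
    assume "\<not> - int N \<le> k"
    hence "inverse q ^ N < q powi k"
      using power_int_strict_decreasing[of k "- int N" q] q_pos q_less_1
      by (simp add: power_int_minus power_inverse)
    moreover obtain x where "x \<in> I" "absK x = q powi k" using k unfolding E_def by blast
    ultimately show False using bounded N by force
  qed
  define m where "m = Min (E \<inter> {- int N..k0})"
  have fin: "finite (E \<inter> {- int N..k0})" by simp
  have "k0 \<in> E \<inter> {- int N..k0}" using k0 lower[OF k0] by simp
  hence "m \<in> E" using Min_in[OF fin] unfolding m_def by blast
  then obtain a where a: "a \<in> I" "a \<noteq> 0" "absK a = q powi m" unfolding E_def by blast
  have m_le: "m \<le> k" if k: "k \<in> E" for k
  proof -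
    have "m \<le> k0" unfolding m_def using fin k0 lower[OF k0] by simp
    thus ?thesis unfolding m_def using fin k lower[OF k] by (cases "k \<le> k0") auto
  qed
  have "absK x \<le> absK a" if x: "x \<in> I" for x
  proof (cases "x = 0")
    case False
    then obtain k where k: "absK x = q powi k" using absK_discrete by blast
    hence "m \<le> k" using m_le x False unfolding E_def by blast
    thus ?thesis using k a(3) power_int_decreasing[of m k q] q_pos q_less_1 by simp
  qed (simp add: a)
  thus ?thesis using that a by blast
qed

definition Kvec :: "(nat \<Rightarrow> 'k) set" where "Kvec = {v. \<forall>i>d. v i = 0}"

definition OK_submodule :: "(nat \<Rightarrow> 'k) set \<Rightarrow> bool" where
  "OK_submodule M \<longleftrightarrow> 0 \<in> M \<and> (\<forall>u\<in>M. \<forall>v\<in>M. u + v \<in> M)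
     \<and> (\<forall>c u. absK c \<le> 1 \<longrightarrow> u \<in> M \<longrightarrow> (\<lambda>i. c * u i) \<in> M)"

lemma OK_submoduleD:
  assumes "OK_submodule M"
  shows OK_submodule_0: "0 \<in> M"
    and OK_submodule_add: "u \<in> M \<Longrightarrow> v \<in> M \<Longrightarrow> u + v \<in> M"
    and OK_submodule_smult: "absK c \<le> 1 \<Longrightarrow> u \<in> M \<Longrightarrow> (\<lambda>i. c * u i) \<in> M"
  using assms unfolding OK_submodule_def by blast+

lemma OK_submodule_minus: "OK_submodule M \<Longrightarrow> u \<in> M \<Longrightarrow> - u \<in> M"
  using OK_submodule_smult[of M "-1" u] by (simp add: fun_Compl_def)

lemma OK_submodule_Int: "OK_submodule U \<Longrightarrow> OK_submodule V \<Longrightarrow> OK_submodule (U \<inter> V)"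
  unfolding OK_submodule_def by blast

lemma OK_submodule_sum:
  assumes "OK_submodule M" "\<forall>s\<in>F. absK (c s) \<le> 1" "\<forall>s\<in>F. g s \<in> M"
  shows "(\<Sum>s\<in>F. (\<lambda>i. c s * g s i)) \<in> M"
  using assms(2,3)
  by (induction F rule: infinite_finite_induct)
     (auto intro: OK_submodule_add[OF assms(1)] OK_submodule_smult[OF assms(1)] OK_submodule_0[OF assms(1)])

lemma OK_submodule_plus:
  assumes A: "OK_submodule A" and B: "OK_submodule B"
  shows "OK_submodule (A + B)"
  unfolding OK_submodule_def
proof (intro conjI ballI allI impI)
  show "0 \<in> A + B" using set_plus_intro[OF OK_submodule_0[OF A] OK_submodule_0[OF B]] by simp
next
  fix u v assume "u \<in> A + B" "v \<in> A + B"
  then obtain a b a' b' where "u = a + b" "v = a' + b'" "a \<in> A" "b \<in> B" "a' \<in> A" "b' \<in> B"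
    by (auto elim!: set_plus_elim)
  thus "u + v \<in> A + B"
    using set_plus_intro[OF OK_submodule_add[OF A] OK_submodule_add[OF B], of a a' b b']
    by (simp add: algebra_simps)
next
  fix c u assume c: "absK c \<le> 1" and "u \<in> A + B"
  then obtain a b where "u = a + b" "a \<in> A" "b \<in> B" by (auto elim!: set_plus_elim)
  thus "(\<lambda>i. c * u i) \<in> A + B"
    using set_plus_intro[OF OK_submodule_smult[OF A c] OK_submodule_smult[OF B c], of a b]
    by (simp add: distrib_left plus_fun_def)
qed

definition full_lattice :: "(nat \<Rightarrow> 'k) set \<Rightarrow> bool" where
  "full_lattice M \<longleftrightarrow> M \<subseteq> Kvec \<and> OK_submodule M \<and> (\<exists>B. \<forall>u\<in>M. \<forall>i. absK (u i) \<le> B)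
     \<and> (\<exists>c. c \<noteq> 0 \<and> (\<forall>i\<le>d. 0(i := c) \<in> M))"

lemma full_latticeD:
  assumes "full_lattice M"
  shows full_lattice_Kvec: "u \<in> M \<Longrightarrow> i > d \<Longrightarrow> u i = 0"
    and full_lattice_submodule: "OK_submodule M"
    and full_lattice_bounded: "\<exists>B. \<forall>u\<in>M. \<forall>i. absK (u i) \<le> B"
    and full_lattice_basis_multiples: "\<exists>c. c \<noteq> 0 \<and> (\<forall>i\<le>d. 0(i := c) \<in> M)"
  using assms unfolding full_lattice_def Kvec_def by blast+

lemma full_lattice_pivots:
  assumes M: "full_lattice M"
  obtains b where "\<And>i. i \<le> d \<Longrightarrow> b i \<in> M \<and> (\<forall>k<i. b i k = 0) \<and> b i i \<noteq> 0
      \<and> (\<forall>u\<in>M. (\<forall>k<i. u k = 0) \<longrightarrow> absK (u i) \<le> absK (b i i))"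
proof -
  obtain B where B: "\<forall>u\<in>M. \<forall>i. absK (u i) \<le> B" using full_lattice_bounded[OF M] by blast
  obtain c where c: "c \<noteq> 0" "\<forall>i\<le>d. 0(i := c) \<in> M" using full_lattice_basis_multiples[OF M] by blast
  have "\<exists>b. b \<in> M \<and> (\<forall>k<i. b k = 0) \<and> b i \<noteq> 0 \<and> (\<forall>u\<in>M. (\<forall>k<i. u k = 0) \<longrightarrow> absK (u i) \<le> absK (b i))"
    if i: "i \<le> d" for i
  proof -
    define I where "I = (\<lambda>u. u i) ` {u\<in>M. \<forall>k<i. u k = 0}"
    have "c \<in> I" unfolding I_def using c i by (intro image_eqI[of _ _ "0(i := c)"]) auto
    moreover have "\<forall>x\<in>I. absK x \<le> B" unfolding I_def using B by auto
    ultimately obtain a where "a \<in> I" "a \<noteq> 0" "\<forall>x\<in>I. absK x \<le> absK a"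
      using exists_max_absK c(1) by metis
    thus ?thesis unfolding I_def by auto
  qed
  thus ?thesis using that by metis
qed

lemma pivots_span:
  assumes M: "full_lattice M"
    and b: "\<And>i. i \<le> d \<Longrightarrow> b i \<in> M \<and> (\<forall>k<i. b i k = 0) \<and> b i i \<noteq> 0
      \<and> (\<forall>u\<in>M. (\<forall>k<i. u k = 0) \<longrightarrow> absK (u i) \<le> absK (b i i))"
    and "j \<le> Suc d" and "u \<in> M" and "\<forall>k<j. u k = 0"
  shows "\<exists>c. (\<forall>i. absK (c i) \<le> 1) \<and> u = (\<Sum>i\<in>{j..d}. (\<lambda>k. c i * b i k))"
  using assms(3-5)
proof (induction j arbitrary: u rule: inc_induct)
  case base
  hence "u = 0" using full_lattice_Kvec[OF M] by (metis not_less zero_fun_def ext less_Suc_eq_le)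
  thus ?case by (intro exI[of _ "\<lambda>_. 0"]) simp
next
  case (step m)
  have m: "m \<le> d" using step by simp
  note bm = b[OF m]
  define a where "a = u m / b m m"
  have a: "absK a \<le> 1"
    using bm step.prems nonarch_abs_pos[OF nonarch_absK, of "b m m"] by (simp add: a_def absK_divide)
  define u' where "u' = u + (\<lambda>k. (- a) * b m k)"
  have "u' \<in> M" unfolding u'_def
    using step.prems bm a full_lattice_submodule[OF M]
    by (intro OK_submodule_add OK_submodule_smult) simp_all
  moreover have "\<forall>k<Suc m. u' k = 0"
    using step.prems bm by (auto simp: u'_def a_def less_Suc_eq)
  ultimately obtain c' where c': "\<forall>i. absK (c' i) \<le> 1" "u' = (\<Sum>i\<in>{Suc m..d}. (\<lambda>k. c' i * b i k))"
    using step.IH by blast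
  define c where "c = c'(m := a)"
  have "(\<Sum>i\<in>{m..d}. (\<lambda>k. c i * b i k)) = (\<lambda>k. a * b m k) + (\<Sum>i\<in>{Suc m..d}. (\<lambda>k. c' i * b i k))"
    unfolding sum.atLeast_Suc_atMost[OF m] c_def by (auto intro: sum.cong)
  also have "\<dots> = u" using c'(2) by (simp add: u'_def fun_eq_iff algebra_simps)
  moreover have "\<forall>i. absK (c i) \<le> 1" using c'(1) a by (simp add: c_def)
  ultimately show ?case by (intro exI[of _ c]) simp
qed

lemma full_lattice_triangular_basis:
  assumes M: "full_lattice M"
  obtains b where "\<forall>i\<le>d. b i \<in> M \<and> b i i \<noteq> 0 \<and> (\<forall>k<i. b i k = 0)"
    and "\<forall>u\<in>M. \<exists>c. (\<forall>i. absK (c i) \<le> 1) \<and> u = (\<Sum>i\<le>d. (\<lambda>k. c i * b i k))"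
proof -
  obtain b where b: "\<And>i. i \<le> d \<Longrightarrow> b i \<in> M \<and> (\<forall>k<i. b i k = 0) \<and> b i i \<noteq> 0
      \<and> (\<forall>u\<in>M. (\<forall>k<i. u k = 0) \<longrightarrow> absK (u i) \<le> absK (b i i))"
    using full_lattice_pivots[OF M] by blast
  have "\<forall>u\<in>M. \<exists>c. (\<forall>i. absK (c i) \<le> 1) \<and> u = (\<Sum>i\<le>d. (\<lambda>k. c i * b i k))"
    using pivots_span[OF M b, of 0] by (simp add: atLeast0AtMost)
  thus ?thesis using that b by blast
qed

definition pairing :: "(nat \<Rightarrow> 'k) \<Rightarrow> (nat \<Rightarrow> 'k) \<Rightarrow> 'k" where
  "pairing f u = (\<Sum>i\<le>d. f i * u i)"

definition dual_lattice :: "(nat \<Rightarrow> 'k) set \<Rightarrow> (nat \<Rightarrow> 'k) set" where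
  "dual_lattice M = {f\<in>Kvec. \<forall>u\<in>M. absK (pairing f u) \<le> 1}"

lemma pairing_commute: "pairing f u = pairing u f"
  unfolding pairing_def by (simp add: mult.commute)

lemma pairing_add: "pairing (f + g) u = pairing f u + pairing g u"
  unfolding pairing_def by (simp add: sum.distrib distrib_right)

lemma pairing_smult: "pairing (\<lambda>i. c * f i) u = c * pairing f u"
  unfolding pairing_def by (simp add: sum_distrib_left mult.assoc)

lemma pairing_basis_vector: "i \<le> d \<Longrightarrow> pairing f (0(i := c)) = f i * c"
  unfolding pairing_def by (simp add: if_distrib cong: if_cong)

lemma sum_pairing_expand:
  "(\<Sum>k\<le>d. g k * (\<Sum>i\<in>I. c i * b i k)) = (\<Sum>i\<in>I. c i * pairing g (b i))"
proof -
  have "(\<Sum>k\<le>d. g k * (\<Sum>i\<in>I. c i * b i k)) = (\<Sum>k\<le>d. \<Sum>i\<in>I. c i * (g k * b i k))"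
    by (simp add: sum_distrib_left mult.left_commute)
  also have "\<dots> = (\<Sum>i\<in>I. \<Sum>k\<le>d. c i * (g k * b i k))"
    by (rule sum.swap)
  finally show ?thesis by (simp add: pairing_def sum_distrib_left)
qed

lemma triangular_inj_on:
  fixes b :: "nat \<Rightarrow> nat \<Rightarrow> 'a::zero"
  assumes "\<forall>i\<le>d. b i i \<noteq> 0 \<and> (\<forall>k<i. b i k = 0)"
  shows "inj_on b {..d}"
proof (rule inj_onI, rule ccontr)
  fix i i' assume "i \<in> {..d}" "i' \<in> {..d}" "b i = b i'" "i \<noteq> i'"
  thus False using assms by (metis atMost_iff linorder_neqE_nat)
qed

lemma dual_basis:
  assumes basis: "\<forall>i\<le>d. b i \<in> M \<and> b i i \<noteq> 0 \<and> (\<forall>k<i. b i k = 0)"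
    and span: "\<forall>u\<in>M. \<exists>c. (\<forall>i. absK (c i) \<le> 1) \<and> u = (\<Sum>i\<le>d. (\<lambda>k. c i * b i k))"
    and j: "j \<le> d"
  obtains g where "g \<in> dual_lattice M" "\<forall>i\<le>d. pairing g (b i) = (if i = j then 1 else 0)"
proof -
  obtain x where x: "\<forall>i\<le>d. (\<Sum>k\<le>d. b i k * x k) = (if i = j then 1 else 0)"
    using upper_triangular_solvable[of d b "\<lambda>i. if i = j then 1 else 0"] basis by auto
  define g where "g = (\<lambda>k. if k \<le> d then x k else 0)"
  have g: "\<forall>i\<le>d. pairing g (b i) = (if i = j then 1 else 0)"
    using x by (simp add: pairing_def g_def mult.commute)
  have "absK (pairing g u) \<le> 1" if "u \<in> M" for u
  proof -
    obtain c where c: "\<forall>i. absK (c i) \<le> 1" "u = (\<Sum>i\<le>d. (\<lambda>k. c i * b i k))"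
      using span \<open>u \<in> M\<close> by blast
    have "pairing g u = (\<Sum>i\<le>d. c i * pairing g (b i))"
      unfolding c(2) using sum_pairing_expand[where g=g and I="{..d}" and c=c and b=b]
      by (simp add: pairing_def sum_fun_apply)
    also have "\<dots> = (\<Sum>i\<le>d. if i = j then c i else 0)" using g by (intro sum.cong) auto
    also have "\<dots> = c j" using j by simp
    finally show ?thesis using c(1) by simp
  qed
  hence "g \<in> dual_lattice M" unfolding dual_lattice_def Kvec_def g_def by auto
  thus ?thesis using that g by blast
qed

lemma triangular_coordinates_if_dual_integral:
  fixes j :: "'k \<Rightarrow> 'f::field" and w :: "'f \<Rightarrow> real" and y :: "nat \<Rightarrow> 'f"
  assumes M: "full_lattice M" and j: "field_hom j" and y: "\<forall>i>d. y i = 0"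
    and hyp: "\<forall>f\<in>dual_lattice M. w (\<Sum>i\<le>d. j (f i) * y i) \<le> 1"
    and basis: "\<forall>i\<le>d. b i \<in> M \<and> b i i \<noteq> 0 \<and> (\<forall>k<i. b i k = 0)"
    and span: "\<forall>u\<in>M. \<exists>c. (\<forall>i. absK (c i) \<le> 1) \<and> u = (\<Sum>i\<le>d. (\<lambda>k. c i * b i k))"
  obtains c where "\<forall>i\<le>d. w (c i) \<le> 1" "y = (\<Sum>i\<le>d. (\<lambda>k. c i * j (b i k)))"
proof -
  obtain c where c: "\<forall>k\<le>d. (\<Sum>i\<le>d. j (b i k) * c i) = y k"
    using lower_triangular_solvable[of d "\<lambda>k i. j (b i k)" y] basis
    by (auto simp: field_hom_eq_0_iff[OF j] field_hom_0[OF j])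
  have y_eq: "y = (\<Sum>i\<le>d. (\<lambda>k. c i * j (b i k)))"
  proof
    fix k
    show "y k = (\<Sum>i\<le>d. (\<lambda>k. c i * j (b i k))) k"
    proof (cases "k \<le> d")
      case False
      hence "\<forall>i\<le>d. b i k = 0" using basis full_lattice_Kvec[OF M] by auto
      thus ?thesis using y False by (simp add: sum_fun_apply field_hom_0[OF j])
    qed (use c in \<open>simp add: sum_fun_apply mult.commute\<close>)
  qed
  have "w (c i) \<le> 1" if i: "i \<le> d" for i
  proof -
    obtain g where g: "g \<in> dual_lattice M" "\<forall>i'\<le>d. pairing g (b i') = (if i' = i then 1 else 0)"
      using dual_basis[OF basis span i] by blast
    have "(\<Sum>k\<le>d. j (g k) * y k) = (\<Sum>k\<le>d. \<Sum>i'\<le>d. c i' * (j (g k) * j (b i' k)))"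
      unfolding y_eq sum_fun_apply by (simp add: sum_distrib_left algebra_simps)
    also have "\<dots> = (\<Sum>i'\<le>d. \<Sum>k\<le>d. c i' * (j (g k) * j (b i' k)))"
      by (rule sum.swap)
    also have "\<dots> = (\<Sum>i'\<le>d. c i' * j (pairing g (b i')))"
      by (simp add: pairing_def sum_distrib_left field_hom_sum[OF j] field_hom_mult[OF j])
    also have "\<dots> = (\<Sum>i'\<le>d. if i' = i then c i' else 0)"
      using g(2) by (intro sum.cong) (auto simp: field_hom_0[OF j] field_hom_1[OF j])
    also have "\<dots> = c i" using i by simp
    finally show ?thesis using hyp g(1) by metis
  qed
  thus ?thesis using that y_eq by blast
qed

text \<open>With \<open>j = id\<close> this is double duality for full lattices; with \<open>j = \<iota>\<close> it says that the
  \<open>O\<close>-span of \<open>M\<close> is cut out by the dual lattice, which is how flatness of \<open>O\<close> over \<open>O_K\<close>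
  enters below.\<close>

lemma integral_combination_if_dual_integral:
  fixes j :: "'k \<Rightarrow> 'f::field" and w :: "'f \<Rightarrow> real" and y :: "nat \<Rightarrow> 'f"
  assumes M: "full_lattice M" and j: "field_hom j" and y: "\<forall>i>d. y i = 0"
    and hyp: "\<forall>f\<in>dual_lattice M. w (\<Sum>i\<le>d. j (f i) * y i) \<le> 1"
  shows "\<exists>F c. finite F \<and> F \<subseteq> M \<and> (\<forall>s\<in>F. w (c s) \<le> 1) \<and> y = (\<Sum>s\<in>F. (\<lambda>i. c s * j (s i)))"
proof -
  obtain b where basis: "\<forall>i\<le>d. b i \<in> M \<and> b i i \<noteq> 0 \<and> (\<forall>k<i. b i k = 0)"
    and span: "\<forall>u\<in>M. \<exists>c. (\<forall>i. absK (c i) \<le> 1) \<and> u = (\<Sum>i\<le>d. (\<lambda>k. c i * b i k))"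
    using full_lattice_triangular_basis[OF M] by blast
  obtain c where c_le: "\<forall>i\<le>d. w (c i) \<le> 1" and y_eq: "y = (\<Sum>i\<le>d. (\<lambda>k. c i * j (b i k)))"
    using triangular_coordinates_if_dual_integral[OF M j y hyp basis span] by blast
  have inj: "inj_on b {..d}" using triangular_inj_on basis by blast
  define c' where "c' = (\<lambda>s. c (the_inv_into {..d} b s))"
  have "(\<Sum>s\<in>b ` {..d}. (\<lambda>k. c' s * j (s k))) = (\<Sum>i\<le>d. (\<lambda>k. c i * j (b i k)))"
    using the_inv_into_f_f[OF inj] by (simp add: sum.reindex[OF inj] c'_def)
  moreover have "\<forall>s\<in>b ` {..d}. w (c' s) \<le> 1"
    using the_inv_into_f_f[OF inj] c_le by (auto simp: c'_def)
  ultimately show ?thesis using basis y_eq by (intro exI[of _ "b ` {..d}"] exI[of _ c']) auto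
qed

lemma dual_dual_subset:
  assumes M: "full_lattice M"
  shows "dual_lattice (dual_lattice M) \<subseteq> M"
proof
  fix u assume u: "u \<in> dual_lattice (dual_lattice M)"
  have "\<forall>f\<in>dual_lattice M. absK (pairing f u) \<le> 1"
    using u unfolding dual_lattice_def by (simp add: pairing_commute[of u])
  hence "\<forall>f\<in>dual_lattice M. absK (\<Sum>i\<le>d. id (f i) * u i) \<le> 1"
    by (simp add: pairing_def)
  moreover have "\<forall>i>d. u i = 0" using u by (simp add: dual_lattice_def Kvec_def)
  ultimately obtain F c where "F \<subseteq> M" "\<forall>s\<in>F. absK (c s) \<le> 1" "u = (\<Sum>s\<in>F. (\<lambda>i. c s * id (s i)))"
    using integral_combination_if_dual_integral[OF M field_hom_id, of u absK] by auto
  thus "u \<in> M" using OK_submodule_sum[OF full_lattice_submodule[OF M], of F c "\<lambda>s. s"] by (simp add: subset_eq)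
qed

lemma dual_lattice_antimono: "A \<subseteq> B \<Longrightarrow> dual_lattice B \<subseteq> dual_lattice A"
  unfolding dual_lattice_def by blast

lemma OK_submodule_dual_lattice: "OK_submodule (dual_lattice M)"
  unfolding OK_submodule_def
proof (intro conjI ballI allI impI)
  show "0 \<in> dual_lattice M" by (simp add: dual_lattice_def Kvec_def pairing_def)
  show "f + g \<in> dual_lattice M" if "f \<in> dual_lattice M" "g \<in> dual_lattice M" for f g
    using that unfolding dual_lattice_def Kvec_def by (simp add: pairing_add absK_add_le)
  show "(\<lambda>i. c * f i) \<in> dual_lattice M" if "absK c \<le> 1" "f \<in> dual_lattice M" for c f
    using that unfolding dual_lattice_def Kvec_def by (simp add: pairing_smult absK_mult_le_1)
qed

lemma exists_small_scalar: "\<exists>c. c \<noteq> 0 \<and> absK c * B \<le> 1"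
proof -
  have "0 < inverse (max B 1)" by simp
  then obtain m where m: "q ^ m < inverse (max B 1)"
    using real_arch_pow_inv[OF _ q_less_1] by blast
  have "q ^ m * B \<le> q ^ m * max B 1" using q_pos by (intro mult_left_mono) auto
  also have "\<dots> \<le> inverse (max B 1) * max B 1" using m by (intro mult_right_mono) auto
  finally have "absK (piK ^ m) * B \<le> 1" by (simp add: absK_power)
  thus ?thesis using piK_nonzero by (intro exI[of _ "piK ^ m"]) simp
qed

lemma full_lattice_dual_lattice:
  assumes M: "full_lattice M"
  shows "full_lattice (dual_lattice M)"
proof -
  obtain c0 where c0: "c0 \<noteq> 0" "\<forall>i\<le>d. 0(i := c0) \<in> M" using full_lattice_basis_multiples[OF M] by blast
  have "absK (f i) \<le> inverse (absK c0)" if f: "f \<in> dual_lattice M" for f i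
  proof (cases "i \<le> d")
    case True
    hence "absK (pairing f (0(i := c0))) \<le> 1" using f c0 by (auto simp: dual_lattice_def)
    thus ?thesis using True c0(1) nonarch_abs_pos[OF nonarch_absK, of c0]
      by (simp add: pairing_basis_vector absK_mult field_simps)
  qed (use f in \<open>simp add: dual_lattice_def Kvec_def\<close>)
  moreover obtain B where B: "\<forall>u\<in>M. \<forall>i. absK (u i) \<le> B" using full_lattice_bounded[OF M] by blast
  obtain c where c: "c \<noteq> 0" "absK c * B \<le> 1" using exists_small_scalar by blast
  have "0(i := c) \<in> dual_lattice M" if i: "i \<le> d" for i
  proof -
    have "absK (pairing (0(i := c)) u) \<le> 1" if "u \<in> M" for u
    proof -
      have "absK (pairing (0(i := c)) u) = absK c * absK (u i)"
        using i by (simp add: pairing_commute[of "0(i := c)"] pairing_basis_vector absK_mult)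
      also have "\<dots> \<le> absK c * B" using B \<open>u \<in> M\<close> by (intro mult_left_mono) auto
      finally show ?thesis using c(2) by simp
    qed
    thus ?thesis using i by (simp add: dual_lattice_def Kvec_def)
  qed
  ultimately show ?thesis using c(1) OK_submodule_dual_lattice
    unfolding full_lattice_def by (auto simp: dual_lattice_def)
qed

lemma full_lattice_plus:
  assumes A: "full_lattice A" and B: "full_lattice B"
  shows "full_lattice (A + B)"
proof -
  obtain BA where BA: "\<forall>u\<in>A. \<forall>i. absK (u i) \<le> BA" using full_lattice_bounded[OF A] by blast
  obtain BB where BB: "\<forall>u\<in>B. \<forall>i. absK (u i) \<le> BB" using full_lattice_bounded[OF B] by blast
  have "A + B \<subseteq> Kvec"
  proof
    fix u assume "u \<in> A + B"
    then obtain a b where "u = a + b" "a \<in> A" "b \<in> B" by (auto elim!: set_plus_elim)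
    thus "u \<in> Kvec"
      using full_lattice_Kvec[OF A, of a] full_lattice_Kvec[OF B, of b] by (simp add: Kvec_def)
  qed
  moreover have "\<forall>u\<in>A + B. \<forall>i. absK (u i) \<le> max BA BB"
  proof (intro ballI allI)
    fix u i assume "u \<in> A + B"
    then obtain a b where "u = a + b" "a \<in> A" "b \<in> B" by (auto elim!: set_plus_elim)
    moreover have "absK (a i) \<le> max BA BB" using BA \<open>a \<in> A\<close> by (simp add: le_max_iff_disj)
    moreover have "absK (b i) \<le> max BA BB" using BB \<open>b \<in> B\<close> by (simp add: le_max_iff_disj)
    ultimately
    show "absK (u i) \<le> max BA BB" by (simp add: absK_add_le)
  qed
  moreover have "A \<subseteq> A + B"
    using set_zero_plus2[OF OK_submodule_0[OF full_lattice_submodule[OF B]], of A] by (simp add: add.commute)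
  moreover obtain c where "c \<noteq> 0" "\<forall>i\<le>d. 0(i := c) \<in> A"
    using full_lattice_basis_multiples[OF A] by blast
  ultimately show ?thesis
    using OK_submodule_plus[OF full_lattice_submodule[OF A] full_lattice_submodule[OF B]]
    unfolding full_lattice_def by blast
qed

lemma dual_lattice_Int:
  assumes U: "full_lattice U" and V: "full_lattice V"
  shows "dual_lattice (U \<inter> V) \<subseteq> dual_lattice U + dual_lattice V"
proof -
  let ?N = "dual_lattice U + dual_lattice V"
  have zero: "0 \<in> dual_lattice M" for M
    by (rule OK_submodule_0[OF OK_submodule_dual_lattice])
  have "dual_lattice U \<subseteq> ?N"
    using set_zero_plus2[OF zero, of "dual_lattice U" V] by (simp add: add.commute)
  hence "dual_lattice ?N \<subseteq> U"
    using dual_lattice_antimono dual_dual_subset[OF U] by blast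
  moreover have "dual_lattice ?N \<subseteq> V"
    using set_zero_plus2[OF zero, of "dual_lattice V" U] dual_lattice_antimono dual_dual_subset[OF V]
    by blast
  ultimately have "dual_lattice (U \<inter> V) \<subseteq> dual_lattice (dual_lattice ?N)"
    unfolding dual_lattice_def by (auto simp: pairing_commute)
  also have "\<dots> \<subseteq> ?N"
    by (intro dual_dual_subset full_lattice_plus full_lattice_dual_lattice U V)
  finally show ?thesis .
qed

lemma Lam_iff: "v \<in> Lam \<iota> av d \<longleftrightarrow> (\<forall>i. absK (v i) \<le> 1) \<and> (\<forall>i>d. v i = 0)"
  by (simp add: Lam_def absK_def)

lemma OK_submodule_Lam: "OK_submodule (Lam \<iota> av d)"
  unfolding OK_submodule_def by (auto simp: Lam_iff absK_add_le absK_mult_le_1)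

lemma piLam_iff: "u \<in> piLam \<iota> av piK d n \<longleftrightarrow> (\<lambda>i. u i / piK ^ n) \<in> Lam \<iota> av d"
proof
  assume "u \<in> piLam \<iota> av piK d n"
  then obtain v where "u = (\<lambda>i. piK ^ n * v i)" "v \<in> Lam \<iota> av d" unfolding piLam_def by blast
  thus "(\<lambda>i. u i / piK ^ n) \<in> Lam \<iota> av d" using piK_nonzero by simp
next
  assume "(\<lambda>i. u i / piK ^ n) \<in> Lam \<iota> av d"
  moreover have "u = (\<lambda>i. piK ^ n * (u i / piK ^ n))" using piK_nonzero by simp
  ultimately show "u \<in> piLam \<iota> av piK d n" unfolding piLam_def by (intro CollectI exI conjI)
qed

lemma OK_submodule_piLam: "OK_submodule (piLam \<iota> av piK d n)"
  unfolding OK_submodule_def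
proof (intro conjI ballI allI impI)
  show "0 \<in> piLam \<iota> av piK d n"
    using OK_submodule_0[OF OK_submodule_Lam] by (simp add: piLam_iff zero_fun_def)
  show "u + v \<in> piLam \<iota> av piK d n" if "u \<in> piLam \<iota> av piK d n" "v \<in> piLam \<iota> av piK d n" for u v
  proof -
    have "(\<lambda>i. u i / piK ^ n) + (\<lambda>i. v i / piK ^ n) \<in> Lam \<iota> av d"
      using that OK_submodule_add[OF OK_submodule_Lam] by (simp add: piLam_iff)
    thus ?thesis by (simp add: piLam_iff plus_fun_def add_divide_distrib)
  qed
  show "(\<lambda>i. c * u i) \<in> piLam \<iota> av piK d n" if "absK c \<le> 1" "u \<in> piLam \<iota> av piK d n" for c u
  proof -
    have "(\<lambda>i. c * (u i / piK ^ n)) \<in> Lam \<iota> av d"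
      using that OK_submodule_smult[OF OK_submodule_Lam that(1), of "\<lambda>i. u i / piK ^ n"]
      by (simp add: piLam_iff)
    thus ?thesis by (simp add: piLam_iff)
  qed
qed

lemma lattice_mod_iff:
  "lattice_mod \<iota> av piK d n M \<longleftrightarrow> M \<subseteq> Lam \<iota> av d \<and> piLam \<iota> av piK d n \<subseteq> M \<and> OK_submodule M"
  unfolding lattice_mod_def OK_submodule_def absK_def by blast

lemma basis_vector_mem_piLam: "i \<le> d \<Longrightarrow> 0(i := piK ^ n) \<in> piLam \<iota> av piK d n"
  using piK_nonzero by (simp add: piLam_iff Lam_iff)

lemma lattice_mod_full_lattice:
  assumes M: "lattice_mod \<iota> av piK d n M"
  shows "full_lattice M"
  unfolding full_lattice_def
proof (intro conjI)
  show "M \<subseteq> Kvec" "OK_submodule M"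
    using M by (auto simp: lattice_mod_iff Lam_iff Kvec_def)
  show "\<exists>B. \<forall>u\<in>M. \<forall>i. absK (u i) \<le> B"
    using M by (auto simp: lattice_mod_iff Lam_iff subset_eq)
  show "\<exists>c. c \<noteq> 0 \<and> (\<forall>i\<le>d. 0(i := c) \<in> M)"
    using M basis_vector_mem_piLam piK_nonzero
    by (intro exI[of _ "piK ^ n"]) (auto simp: lattice_mod_iff)
qed

lemma lattice_mod_Int:
  "lattice_mod \<iota> av piK d n U \<Longrightarrow> lattice_mod \<iota> av piK d n V \<Longrightarrow> lattice_mod \<iota> av piK d n (U \<inter> V)"
  unfolding lattice_mod_def by auto

section \<open>Intersections of the sets \<open>Y_U\<close>\<close>

lemma dual_pairing_O_span:
  assumes g: "g \<in> dual_lattice M" and w: "w \<in> O_span \<iota> av M"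
  shows "av (\<Sum>i\<le>d. \<iota> (g i) * w i) \<le> 1"
proof -
  obtain F c where F: "F \<subseteq> M" "\<forall>s\<in>F. av (c s) \<le> 1" and w_eq: "w = (\<Sum>s\<in>F. (\<lambda>i. c s * \<iota> (s i)))"
    using w unfolding O_span_def by blast
  have "(\<Sum>i\<le>d. \<iota> (g i) * w i) = (\<Sum>i\<le>d. \<Sum>s\<in>F. c s * (\<iota> (g i) * \<iota> (s i)))"
    unfolding w_eq sum_fun_apply by (simp add: sum_distrib_left mult.left_commute)
  also have "\<dots> = (\<Sum>s\<in>F. \<Sum>i\<le>d. c s * (\<iota> (g i) * \<iota> (s i)))" by (rule sum.swap)
  also have "\<dots> = (\<Sum>s\<in>F. c s * \<iota> (pairing g s))"
    by (simp add: pairing_def sum_distrib_left field_hom_sum[OF field_hom_\<iota>] field_hom_mult[OF field_hom_\<iota>])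
  finally show ?thesis
  proof (simp, intro nonarch_abs_sum_le[OF nonarch_av] ballI)
    fix s assume "s \<in> F"
    hence "av (c s) \<le> 1" "av (\<iota> (pairing g s)) \<le> 1"
      using g F unfolding dual_lattice_def absK_def by auto
    thus "av (c s * \<iota> (pairing g s)) \<le> 1"
      by (simp add: nonarch_abs_mult[OF nonarch_av] mult_le_one nonarch_abs_nonneg[OF nonarch_av])
  qed simp
qed

lemma dual_pairing_near_O_span:
  assumes M: "lattice_mod \<iota> av piK d n M" and g: "g \<in> dual_lattice M"
    and w: "w \<in> O_span \<iota> av M" and near: "\<forall>i. av (y i - w i) \<le> q ^ n"
  shows "av (\<Sum>i\<le>d. \<iota> (g i) * y i) \<le> 1"
proof -
  have "av (\<iota> (g i) * (y i - w i)) \<le> 1" if i: "i \<le> d" for i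
  proof -
    have "0(i := piK ^ n) \<in> M" using M basis_vector_mem_piLam[OF i] by (auto simp: lattice_mod_iff)
    hence "absK (g i) * q ^ n \<le> 1"
      using g i by (auto simp: dual_lattice_def pairing_basis_vector absK_mult absK_power)
    hence "absK (g i) * av (y i - w i) \<le> 1"
      using near by (meson absK_nonneg mult_left_mono order_trans)
    thus ?thesis by (simp add: nonarch_abs_mult[OF nonarch_av] absK_def)
  qed
  hence "av (\<Sum>i\<le>d. \<iota> (g i) * (y i - w i)) \<le> 1"
    by (intro nonarch_abs_sum_le[OF nonarch_av]) auto
  moreover have "(\<Sum>i\<le>d. \<iota> (g i) * y i) = (\<Sum>i\<le>d. \<iota> (g i) * w i) + (\<Sum>i\<le>d. \<iota> (g i) * (y i - w i))"
    by (simp add: sum.distrib[symmetric] algebra_simps)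
  ultimately show ?thesis
    using dual_pairing_O_span[OF g w] by (simp add: nonarch_abs_add_le[OF nonarch_av])
qed

lemma O_span_Int:
  assumes U: "lattice_mod \<iota> av piK d n U" and V: "lattice_mod \<iota> av piK d n V"
    and y: "\<forall>i>d. y i = 0"
    and w1: "w1 \<in> O_span \<iota> av U" "\<forall>i. av (y i - w1 i) \<le> q ^ n"
    and w2: "w2 \<in> O_span \<iota> av V" "\<forall>i. av (y i - w2 i) \<le> q ^ n"
  shows "y \<in> O_span \<iota> av (U \<inter> V)"
proof -
  have "av (\<Sum>i\<le>d. \<iota> (f i) * y i) \<le> 1" if f: "f \<in> dual_lattice (U \<inter> V)" for f
  proof -
    obtain g h where gh: "g \<in> dual_lattice U" "h \<in> dual_lattice V" "f = g + h"
      using dual_lattice_Int[OF lattice_mod_full_lattice[OF U] lattice_mod_full_lattice[OF V]] f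
      by (auto elim!: set_plus_elim)
    have "(\<Sum>i\<le>d. \<iota> (f i) * y i) = (\<Sum>i\<le>d. \<iota> (g i) * y i) + (\<Sum>i\<le>d. \<iota> (h i) * y i)"
      unfolding gh(3) by (simp add: field_hom_add[OF field_hom_\<iota>] sum.distrib[symmetric] distrib_right)
    thus ?thesis
      using dual_pairing_near_O_span[OF U gh(1) w1] dual_pairing_near_O_span[OF V gh(2) w2]
      by (simp add: nonarch_abs_add_le[OF nonarch_av])
  qed
  hence "\<exists>F c. finite F \<and> F \<subseteq> U \<inter> V \<and> (\<forall>s\<in>F. av (c s) \<le> 1) \<and> y = (\<Sum>s\<in>F. (\<lambda>i. c s * \<iota> (s i)))"
    using integral_combination_if_dual_integral[OF lattice_mod_full_lattice[OF lattice_mod_Int[OF U V]]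
        field_hom_\<iota>] y
    by simp
  thus ?thesis unfolding O_span_def by blast
qed

lemma in_Y_Int:
  assumes U: "lattice_mod \<iota> av piK d n U" and V: "lattice_mod \<iota> av piK d n V"
    and x: "\<forall>i>d. x i = 0" and "in_Y \<iota> av piK n x U" and "in_Y \<iota> av piK n x V"
  shows "in_Y \<iota> av piK n x (U \<inter> V)"
  unfolding in_Y_def
proof (intro allI impI)
  fix l assume l: "\<forall>i. av (l * x i) \<le> 1"
  obtain w1 where w1: "w1 \<in> O_span \<iota> av U" "\<forall>i. av (l * x i - w1 i) \<le> q ^ n"
    using \<open>in_Y \<iota> av piK n x U\<close> l unfolding in_Y_def absK_def by blast
  obtain w2 where w2: "w2 \<in> O_span \<iota> av V" "\<forall>i. av (l * x i - w2 i) \<le> q ^ n"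
    using \<open>in_Y \<iota> av piK n x V\<close> l unfolding in_Y_def absK_def by blast
  have "(\<lambda>i. l * x i) \<in> O_span \<iota> av (U \<inter> V)"
    using O_span_Int[OF U V _ w1 w2] x by simp
  moreover have "\<forall>i. av (l * x i - l * x i) \<le> av (\<iota> piK) ^ n"
    using nonarch_abs_0[OF nonarch_av] q_pos by (simp add: absK_def)
  ultimately show "\<exists>w\<in>O_span \<iota> av (U \<inter> V). \<forall>i. av (l * x i - w i) \<le> av (\<iota> piK) ^ n"
    by (intro bexI[of _ "\<lambda>i. l * x i"]) simp_all
qed

section \<open>Numbers of generators\<close>

definition mod_span :: "nat \<Rightarrow> (nat \<Rightarrow> 'k) set \<Rightarrow> (nat \<Rightarrow> 'k) set" where
  "mod_span n S = OK_span \<iota> av S + piLam \<iota> av piK d n"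

lemma rk'_eq_Least_mod_span:
  "rk' \<iota> av piK d n M = (LEAST r. \<exists>S. finite S \<and> S \<subseteq> M \<and> card S = r \<and> M = mod_span n S)"
proof -
  have "{u + w |u w. u \<in> A \<and> w \<in> B} = A + B" for A B :: "(nat \<Rightarrow> 'k) set"
    by (auto simp: set_plus_def)
  thus ?thesis by (simp add: rk'_def mod_span_def)
qed

lemma OK_span_finite:
  assumes T: "finite T"
  shows "OK_span \<iota> av T = {(\<Sum>t\<in>T. (\<lambda>i. c t * t i)) | c. \<forall>t\<in>T. absK (c t) \<le> 1}"
proof (intro equalityI subsetI)
  fix u assume "u \<in> OK_span \<iota> av T"
  then obtain F c where Fc: "u = (\<Sum>s\<in>F. (\<lambda>i. c s * s i))" "F \<subseteq> T" "\<forall>s\<in>F. absK (c s) \<le> 1"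
    unfolding OK_span_def absK_def by blast
  define c' where "c' = (\<lambda>t. if t \<in> F then c t else 0)"
  have "(\<Sum>t\<in>T. (\<lambda>i. c' t * t i)) = (\<Sum>t\<in>F. (\<lambda>i. c' t * t i))"
    by (rule sum.mono_neutral_right[OF T Fc(2)]) (auto simp: c'_def zero_fun_def)
  also have "\<dots> = u" unfolding Fc(1) c'_def by (intro sum.cong) auto
  finally show "u \<in> {(\<Sum>t\<in>T. (\<lambda>i. c t * t i)) | c. \<forall>t\<in>T. absK (c t) \<le> 1}"
    using Fc(3) by (intro CollectI exI[of _ c']) (auto simp: c'_def)
next
  fix u assume "u \<in> {(\<Sum>t\<in>T. (\<lambda>i. c t * t i)) | c. \<forall>t\<in>T. absK (c t) \<le> 1}"
  thus "u \<in> OK_span \<iota> av T" unfolding OK_span_def absK_def using T by blast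
qed

lemma mem_mod_span_iff:
  assumes "finite T"
  shows "u \<in> mod_span n T \<longleftrightarrow>
    (\<exists>c w. (\<forall>t\<in>T. absK (c t) \<le> 1) \<and> w \<in> piLam \<iota> av piK d n \<and> u = (\<Sum>t\<in>T. (\<lambda>i. c t * t i)) + w)"
  unfolding mod_span_def OK_span_finite[OF assms] set_plus_def by blast

lemma OK_submodule_OK_span:
  assumes T: "finite T"
  shows "OK_submodule (OK_span \<iota> av T)"
  unfolding OK_submodule_def OK_span_finite[OF T]
proof (intro conjI ballI allI impI)
  show "0 \<in> {(\<Sum>t\<in>T. (\<lambda>i. c t * t i)) | c. \<forall>t\<in>T. absK (c t) \<le> 1}"
    by (intro CollectI exI[of _ "\<lambda>_. 0"]) (simp add: fun_eq_iff sum_fun_apply)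
next
  fix u v assume "u \<in> {(\<Sum>t\<in>T. (\<lambda>i. c t * t i)) | c. \<forall>t\<in>T. absK (c t) \<le> 1}"
    "v \<in> {(\<Sum>t\<in>T. (\<lambda>i. c t * t i)) | c. \<forall>t\<in>T. absK (c t) \<le> 1}"
  then obtain c c' where "\<forall>t\<in>T. absK (c t) \<le> 1" "\<forall>t\<in>T. absK (c' t) \<le> 1"
    "u = (\<Sum>t\<in>T. (\<lambda>i. c t * t i))" "v = (\<Sum>t\<in>T. (\<lambda>i. c' t * t i))" by blast
  thus "u + v \<in> {(\<Sum>t\<in>T. (\<lambda>i. c t * t i)) | c. \<forall>t\<in>T. absK (c t) \<le> 1}"
    by (intro CollectI exI[of _ "\<lambda>t. c t + c' t"])
       (simp add: absK_add_le sum.distrib[symmetric] distrib_right fun_eq_iff sum_fun_apply)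
next
  fix a u assume a: "absK a \<le> 1" and "u \<in> {(\<Sum>t\<in>T. (\<lambda>i. c t * t i)) | c. \<forall>t\<in>T. absK (c t) \<le> 1}"
  then obtain c where "\<forall>t\<in>T. absK (c t) \<le> 1" "u = (\<Sum>t\<in>T. (\<lambda>i. c t * t i))" by blast
  thus "(\<lambda>i. a * u i) \<in> {(\<Sum>t\<in>T. (\<lambda>i. c t * t i)) | c. \<forall>t\<in>T. absK (c t) \<le> 1}"
    using a by (intro CollectI exI[of _ "\<lambda>t. a * c t"])
      (simp add: absK_mult_le_1 fun_eq_iff sum_fun_apply sum_distrib_left mult.assoc)
qed

lemma OK_submodule_mod_span: "finite T \<Longrightarrow> OK_submodule (mod_span n T)"
  unfolding mod_span_def by (intro OK_submodule_plus OK_submodule_OK_span OK_submodule_piLam)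

lemma zero_mem_OK_span: "0 \<in> OK_span \<iota> av T"
  unfolding OK_span_def by (intro CollectI exI[of _ "{}"]) (auto simp: zero_fun_def)

lemma piLam_subset_mod_span: "piLam \<iota> av piK d n \<subseteq> mod_span n T"
  unfolding mod_span_def by (rule set_zero_plus2[OF zero_mem_OK_span])

lemma mod_span_empty: "mod_span n {} = piLam \<iota> av piK d n"
  using piLam_subset_mod_span by (auto simp: mem_mod_span_iff)

lemma mem_mod_span: "s \<in> T \<Longrightarrow> s \<in> mod_span n T"
proof -
  assume "s \<in> T"
  hence "(\<Sum>t\<in>{s}. (\<lambda>i. 1 * t i)) \<in> OK_span \<iota> av T"
    unfolding OK_span_def by (intro CollectI exI[of _ "{s}"] exI[of _ "\<lambda>_. 1"])
      (simp add: nonarch_abs_1[OF nonarch_av] field_hom_1[OF field_hom_\<iota>])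
  thus ?thesis
    using set_plus_intro[OF _ OK_submodule_0[OF OK_submodule_piLam], of s] unfolding mod_span_def by simp
qed

lemma mod_span_mono: "S \<subseteq> T \<Longrightarrow> mod_span n S \<subseteq> mod_span n T"
  unfolding mod_span_def OK_span_def by (intro set_plus_mono2) blast+

lemma mod_span_subset:
  assumes N: "lattice_mod \<iota> av piK d n N" and S: "finite S" "S \<subseteq> N"
  shows "mod_span n S \<subseteq> N"
proof
  fix u assume "u \<in> mod_span n S"
  then obtain c w where cw: "\<forall>t\<in>S. absK (c t) \<le> 1" "w \<in> piLam \<iota> av piK d n"
    "u = (\<Sum>t\<in>S. (\<lambda>i. c t * t i)) + w"
    unfolding mem_mod_span_iff[OF S(1)] by blast
  have sub: "OK_submodule N" using N by (simp add: lattice_mod_iff)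
  have "(\<Sum>t\<in>S. (\<lambda>i. c t * t i)) \<in> N" using OK_submodule_sum[OF sub, of S c "\<lambda>t. t"] cw(1) S(2) by auto
  moreover have "w \<in> N" using cw(2) N by (auto simp: lattice_mod_iff)
  ultimately show "u \<in> N" unfolding cw(3) by (rule OK_submodule_add[OF sub])
qed

lemma mod_span_insertE:
  assumes T: "finite T" and s: "s \<notin> T" and u: "u \<in> mod_span n (insert s T)"
  obtains a m where "absK a \<le> 1" "m \<in> mod_span n T" "u = (\<lambda>i. a * s i) + m"
proof -
  obtain c w where cw: "\<forall>t\<in>insert s T. absK (c t) \<le> 1" "w \<in> piLam \<iota> av piK d n"
    "u = (\<Sum>t\<in>insert s T. (\<lambda>i. c t * t i)) + w"
    using u unfolding mem_mod_span_iff[OF finite_insert[THEN iffD2, OF T]] by blast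
  have "(\<Sum>t\<in>T. (\<lambda>i. c t * t i)) + w \<in> mod_span n T"
    unfolding mem_mod_span_iff[OF T] using cw(1,2) by blast
  moreover have "u = (\<lambda>i. c s * s i) + ((\<Sum>t\<in>T. (\<lambda>i. c t * t i)) + w)"
    unfolding cw(3) using T s by (simp add: add.assoc)
  ultimately show ?thesis using that cw(1) by blast
qed

lemma mem_mod_span_insert:
  assumes S: "finite S" and c: "absK c \<le> 1" and b: "b - (\<lambda>i. c * v i) \<in> mod_span n S"
  shows "b \<in> mod_span n (insert v S)"
proof -
  have sub: "OK_submodule (mod_span n (insert v S))" using S by (simp add: OK_submodule_mod_span)
  have "b - (\<lambda>i. c * v i) \<in> mod_span n (insert v S)" using b mod_span_mono[of S "insert v S"] by blast
  moreover have "(\<lambda>i. c * v i) \<in> mod_span n (insert v S)"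
    by (intro OK_submodule_smult[OF sub c] mem_mod_span) simp
  ultimately have "b - (\<lambda>i. c * v i) + (\<lambda>i. c * v i) \<in> mod_span n (insert v S)"
    by (rule OK_submodule_add[OF sub])
  thus ?thesis by simp
qed

lemma lattice_mod_Int_mod_span:
  "lattice_mod \<iota> av piK d n N \<Longrightarrow> finite T \<Longrightarrow> lattice_mod \<iota> av piK d n (N \<inter> mod_span n T)"
  using piLam_subset_mod_span OK_submodule_mod_span
  by (auto simp: lattice_mod_iff intro: OK_submodule_Int)

lemma mod_span_insert_pivot:
  assumes N: "lattice_mod \<iota> av piK d n N" and T: "finite T"
    and coeffs: "\<forall>b\<in>N. \<exists>a m. absK a \<le> absK a0 \<and> m \<in> mod_span n T \<and> b = (\<lambda>i. a * s i) + m"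
    and a0: "a0 \<noteq> 0" and m0: "m0 \<in> mod_span n T" and n0: "(\<lambda>i. a0 * s i) + m0 \<in> N"
    and S': "finite S'" "N \<inter> mod_span n T = mod_span n S'"
  shows "N \<subseteq> mod_span n (insert ((\<lambda>i. a0 * s i) + m0) S')"
proof
  fix b assume b: "b \<in> N"
  then obtain a m where am: "absK a \<le> absK a0" "m \<in> mod_span n T" "b = (\<lambda>i. a * s i) + m"
    using coeffs by blast
  define c where "c = a / a0"
  have c: "absK c \<le> 1"
    using am(1) nonarch_abs_pos[OF nonarch_absK a0] by (simp add: c_def absK_divide)
  have NG: "OK_submodule N" "OK_submodule (mod_span n T)"
    using N T by (simp_all add: lattice_mod_iff OK_submodule_mod_span)
  have "b - (\<lambda>i. c * ((\<lambda>i. a0 * s i) + m0) i) = m - (\<lambda>i. c * m0 i)"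
    using a0 by (simp add: am(3) c_def fun_eq_iff field_simps)
  moreover have "b - (\<lambda>i. c * ((\<lambda>i. a0 * s i) + m0) i) \<in> N"
    using OK_submodule_add[OF NG(1) b OK_submodule_minus[OF NG(1) OK_submodule_smult[OF NG(1) c n0]]]
    by simp
  moreover have "m - (\<lambda>i. c * m0 i) \<in> mod_span n T"
    using OK_submodule_add[OF NG(2) am(2) OK_submodule_minus[OF NG(2) OK_submodule_smult[OF NG(2) c m0]]]
    by simp
  ultimately have "b - (\<lambda>i. c * ((\<lambda>i. a0 * s i) + m0) i) \<in> mod_span n S'"
    using S'(2) by auto
  thus "b \<in> mod_span n (insert ((\<lambda>i. a0 * s i) + m0) S')"
    by (rule mem_mod_span_insert[OF S'(1) c])
qed

lemma exists_pivot_coefficient: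
  assumes T: "finite T" "s \<notin> T" and sub: "N \<subseteq> mod_span n (insert s T)"
    and not_sub: "\<not> N \<subseteq> mod_span n T"
  obtains a0 m0 where "a0 \<noteq> 0" "m0 \<in> mod_span n T" "(\<lambda>i. a0 * s i) + m0 \<in> N"
    "\<forall>b\<in>N. \<exists>a m. absK a \<le> absK a0 \<and> m \<in> mod_span n T \<and> b = (\<lambda>i. a * s i) + m"
proof -
  let ?G = "mod_span n T"
  define I where "I = {a. absK a \<le> 1 \<and> (\<exists>m\<in>?G. (\<lambda>i. a * s i) + m \<in> N)}"
  have decomp: "\<exists>a m. a \<in> I \<and> m \<in> ?G \<and> b = (\<lambda>i. a * s i) + m" if b: "b \<in> N" for b
  proof -
    obtain a m where "absK a \<le> 1" "m \<in> ?G" "b = (\<lambda>i. a * s i) + m"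
      using mod_span_insertE[OF T] b sub by blast
    thus ?thesis using b unfolding I_def by blast
  qed
  have "\<not> I \<subseteq> {0}"
  proof
    assume I0: "I \<subseteq> {0}"
    have "b \<in> ?G" if "b \<in> N" for b
    proof -
      obtain a m where "a \<in> I" "m \<in> ?G" "b = (\<lambda>i. a * s i) + m" using decomp \<open>b \<in> N\<close> by blast
      moreover have "a = 0" using I0 \<open>a \<in> I\<close> by blast
      ultimately show "b \<in> ?G" by (simp add: zero_fun_def[symmetric])
    qed
    thus False using not_sub by blast
  qed
  then obtain a1 where "a1 \<in> I" "a1 \<noteq> 0" by blast
  moreover have "\<forall>a\<in>I. absK a \<le> 1" by (simp add: I_def)
  ultimately obtain a0 where a0: "a0 \<in> I" "a0 \<noteq> 0" "\<forall>a\<in>I. absK a \<le> absK a0"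
    using exists_max_absK by metis
  then obtain m0 where m0: "m0 \<in> ?G" "(\<lambda>i. a0 * s i) + m0 \<in> N" unfolding I_def by blast
  have "\<forall>b\<in>N. \<exists>a m. absK a \<le> absK a0 \<and> m \<in> ?G \<and> b = (\<lambda>i. a * s i) + m"
  proof
    fix b assume "b \<in> N"
    then obtain a m where "a \<in> I" "m \<in> ?G" "b = (\<lambda>i. a * s i) + m" using decomp by blast
    thus "\<exists>a m. absK a \<le> absK a0 \<and> m \<in> ?G \<and> b = (\<lambda>i. a * s i) + m" using a0(3) by blast
  qed
  thus ?thesis using that a0(2) m0 by blast
qed

lemma submodule_of_mod_span:
  assumes "finite T" and "lattice_mod \<iota> av piK d n N" and "N \<subseteq> mod_span n T"
  shows "\<exists>S. finite S \<and> S \<subseteq> N \<and> card S \<le> card T \<and> N = mod_span n S"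
  using assms
proof (induction T arbitrary: N rule: finite_induct)
  case empty
  hence "N = mod_span n {}" by (auto simp: mod_span_empty lattice_mod_iff)
  thus ?case by blast
next
  case (insert s T)
  note N = insert.prems(1)
  obtain S' where S': "finite S'" "S' \<subseteq> N \<inter> mod_span n T" "card S' \<le> card T"
    "N \<inter> mod_span n T = mod_span n S'"
    using insert.IH[OF lattice_mod_Int_mod_span[OF N insert.hyps(1)]] by blast
  show ?case
  proof (cases "N \<subseteq> mod_span n T")
    case True
    thus ?thesis using S' insert.hyps by (intro exI[of _ S']) auto
  next
    case False
    then obtain a0 m0 where a0: "a0 \<noteq> 0" "m0 \<in> mod_span n T" "(\<lambda>i. a0 * s i) + m0 \<in> N"
      "\<forall>b\<in>N. \<exists>a m. absK a \<le> absK a0 \<and> m \<in> mod_span n T \<and> b = (\<lambda>i. a * s i) + m"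
      using exists_pivot_coefficient[OF insert.hyps(1,2) insert.prems(2)] by blast
    define S where "S = insert ((\<lambda>i. a0 * s i) + m0) S'"
    have "N \<subseteq> mod_span n S"
      unfolding S_def by (rule mod_span_insert_pivot[OF N insert.hyps(1) a0(4,1,2,3) S'(1,4)])
    moreover have "finite S" "S \<subseteq> N" "card S \<le> card (insert s T)"
      using S' a0(3) insert.hyps by (auto simp: S_def card_insert_if)
    moreover have "mod_span n S \<subseteq> N" by (rule mod_span_subset[OF N \<open>finite S\<close> \<open>S \<subseteq> N\<close>])
    ultimately show ?thesis by blast
  qed
qed

lemma Lam_subset_mod_span_basis: "Lam \<iota> av d \<subseteq> mod_span n ((\<lambda>i. 0(i := 1)) ` {..d})"
proof
  fix v assume v: "v \<in> Lam \<iota> av d"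
  have inj: "inj_on (\<lambda>i. (0::nat \<Rightarrow> 'k)(i := 1)) {..d}"
    by (rule inj_onI) (metis fun_upd_same fun_upd_other one_neq_zero zero_fun_def)
  define c where "c = (\<lambda>t. pairing t v)"
  have "v = (\<Sum>j\<le>d. (\<lambda>i. v j * (0(j := 1)) i))"
  proof
    fix i
    have "(\<Sum>j\<le>d. (\<lambda>i. v j * (0(j := 1)) i)) i = (\<Sum>j\<le>d. if i = j then v j else 0)"
      unfolding sum_fun_apply by (intro sum.cong) auto
    thus "v i = (\<Sum>j\<le>d. (\<lambda>i. v j * (0(j := 1)) i)) i"
      using v by (cases "i \<le> d") (auto simp: Lam_iff)
  qed
  also have "\<dots> = (\<Sum>t\<in>(\<lambda>i. 0(i := 1)) ` {..d}. (\<lambda>i. c t * t i))"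
    by (simp add: sum.reindex[OF inj] c_def pairing_commute[of _ v] pairing_basis_vector)
  finally have "v = (\<Sum>t\<in>(\<lambda>i. 0(i := 1)) ` {..d}. (\<lambda>i. c t * t i)) + 0" by simp
  moreover have "\<forall>t\<in>(\<lambda>i. 0(i := 1)) ` {..d}. absK (c t) \<le> 1"
    using v by (auto simp: c_def pairing_commute[of _ v] pairing_basis_vector Lam_iff)
  ultimately show "v \<in> mod_span n ((\<lambda>i. 0(i := 1)) ` {..d})"
    unfolding mem_mod_span_iff[OF finite_imageI[OF finite_atMost]]
    using OK_submodule_0[OF OK_submodule_piLam] by blast
qed

lemma lattice_mod_finitely_generated:
  assumes N: "lattice_mod \<iota> av piK d n N"
  shows "\<exists>S. finite S \<and> S \<subseteq> N \<and> N = mod_span n S"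
proof -
  have fin: "finite ((\<lambda>i. (0::nat \<Rightarrow> 'k)(i := 1)) ` {..d})" by simp
  have "N \<subseteq> Lam \<iota> av d" using N by (simp add: lattice_mod_iff)
  hence "N \<subseteq> mod_span n ((\<lambda>i. 0(i := 1)) ` {..d})"
    using Lam_subset_mod_span_basis by (rule subset_trans)
  from submodule_of_mod_span[OF fin N this] show ?thesis by blast
qed

lemma rk'_mono:
  assumes U: "lattice_mod \<iota> av piK d n U" and N: "lattice_mod \<iota> av piK d n N" and "N \<subseteq> U"
  shows "rk' \<iota> av piK d n N \<le> rk' \<iota> av piK d n U"
proof -
  let ?P = "\<lambda>M r. \<exists>S. finite S \<and> S \<subseteq> M \<and> card S = r \<and> M = mod_span n S"
  obtain S0 where "finite S0" "S0 \<subseteq> U" "U = mod_span n S0" using lattice_mod_finitely_generated[OF U] by blast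
  hence "?P U (LEAST r. ?P U r)" by (intro LeastI[of "?P U" "card S0"]) blast
  then obtain SU where SU: "finite SU" "card SU = rk' \<iota> av piK d n U" "U = mod_span n SU"
    unfolding rk'_eq_Least_mod_span by blast
  obtain SN where SN: "finite SN" "SN \<subseteq> N" "card SN \<le> card SU" "N = mod_span n SN"
    using submodule_of_mod_span[OF SU(1) N] \<open>N \<subseteq> U\<close> SU(3) by blast
  have "?P N (card SN)" using SN by blast
  hence "(LEAST r. ?P N r) \<le> card SN" by (rule Least_le)
  thus ?thesis using SN(3) SU(2) unfolding rk'_eq_Least_mod_span by simp
qed

section \<open>The rank condition\<close>

lemma mem_piLam_1_if_small:
  assumes "u \<in> Lam \<iota> av d" "\<forall>i. absK (u i) \<le> q"
  shows "u \<in> piLam \<iota> av piK d 1"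
  using assms q_pos by (simp add: piLam_iff Lam_iff absK_divide)

lemma residue_representatives:
  obtains R and rep :: "'k \<Rightarrow> 'k"
  where "finite R" "\<And>x. absK x \<le> 1 \<Longrightarrow> rep x \<in> R \<and> absK (x - rep x) < 1"
proof -
  have "\<exists>R. finite R \<and> (\<forall>r\<in>R. av (\<iota> r) \<le> 1) \<and> (\<forall>x. av (\<iota> x) \<le> 1 \<longrightarrow> (\<exists>r\<in>R. av (\<iota> (x - r)) < 1))"
    using local_field unfolding p_adic_local_field_def by (elim conjE)
  then obtain R where R: "finite R" "\<forall>x. absK x \<le> 1 \<longrightarrow> (\<exists>r\<in>R. absK (x - r) < 1)"
    unfolding absK_def by blast
  define rep where "rep = (\<lambda>x. SOME r. r \<in> R \<and> absK (x - r) < 1)"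
  have "rep x \<in> R \<and> absK (x - rep x) < 1" if "absK x \<le> 1" for x
  proof -
    have "\<exists>r. r \<in> R \<and> absK (x - r) < 1" using R(2) that by blast
    thus ?thesis unfolding rep_def by (rule someI_ex)
  qed
  thus ?thesis using that R(1) by blast
qed

lemma absK_diff_le_q_if_same_residue: "absK (x - r) < 1 \<Longrightarrow> absK (y - r) < 1 \<Longrightarrow> absK (x - y) \<le> q"
  using nonarch_abs_diff[OF nonarch_absK, of "x - r" "y - r"] by (intro absK_less_1_imp_le_q) simp

lemma finite_reduction_map:
  obtains R and \<rho> :: "(nat \<Rightarrow> 'k) \<Rightarrow> (nat \<Rightarrow> 'k)"
  where "finite R" "\<rho> ` Lam \<iota> av d \<subseteq> R"
    and "\<And>s s'. s \<in> Lam \<iota> av d \<Longrightarrow> s' \<in> Lam \<iota> av d \<Longrightarrow> \<rho> s = \<rho> s' \<Longrightarrow>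
      (\<lambda>i. s i - s' i) \<in> piLam \<iota> av piK d 1"
proof -
  obtain R and rep :: "'k \<Rightarrow> 'k" where R: "finite R"
    and rep: "\<And>x. absK x \<le> 1 \<Longrightarrow> rep x \<in> R \<and> absK (x - rep x) < 1"
    using residue_representatives by blast
  define \<rho> where "\<rho> = (\<lambda>s::nat \<Rightarrow> 'k. restrict (\<lambda>i. rep (s i)) {..d})"
  have "\<rho> ` Lam \<iota> av d \<subseteq> PiE {..d} (\<lambda>_. R)"
  proof (rule image_subsetI)
    fix s assume "s \<in> Lam \<iota> av d"
    thus "\<rho> s \<in> PiE {..d} (\<lambda>_. R)" unfolding \<rho>_def using rep by (simp add: restrict_PiE_iff Lam_iff)
  qed
  moreover have "(\<lambda>i. s i - s' i) \<in> piLam \<iota> av piK d 1"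
    if s: "s \<in> Lam \<iota> av d" "s' \<in> Lam \<iota> av d" and eq: "\<rho> s = \<rho> s'" for s s'
  proof (rule mem_piLam_1_if_small)
    show "(\<lambda>i. s i - s' i) \<in> Lam \<iota> av d"
      using OK_submodule_add[OF OK_submodule_Lam s(1) OK_submodule_minus[OF OK_submodule_Lam s(2)]]
      by (simp add: fun_diff_def)
    show "\<forall>i. absK (s i - s' i) \<le> q"
    proof
      fix i
      show "absK (s i - s' i) \<le> q"
      proof (cases "i \<le> d")
        case True
        hence "rep (s i) = rep (s' i)" using fun_cong[OF eq, of i] by (simp add: \<rho>_def)
        moreover have "absK (s i - rep (s i)) < 1" "absK (s' i - rep (s' i)) < 1"
          using rep s by (simp_all add: Lam_iff)
        ultimately show ?thesis by (metis absK_diff_le_q_if_same_residue)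
      qed (use s q_pos in \<open>simp add: Lam_iff\<close>)
    qed
  qed
  moreover have "finite (PiE {..d} (\<lambda>_. R))" using R by (simp add: finite_PiE)
  ultimately show ?thesis using that by blast
qed

lemma red_indep_diff_not_mem_piLam_1:
  assumes S: "finite S" "red_indep \<iota> av piK d S" and s: "s \<in> S" "s' \<in> S" "s \<noteq> s'"
  shows "(\<lambda>i. s i - s' i) \<notin> piLam \<iota> av piK d 1"
proof
  assume diff: "(\<lambda>i. s i - s' i) \<in> piLam \<iota> av piK d 1"
  define c where "c = (\<lambda>t. if t = s then (1::'k) else if t = s' then -1 else 0)"
  have "(\<Sum>t\<in>S. (\<lambda>i. c t * t i)) = (\<lambda>i. s i - s' i)"
  proof
    fix i
    have "(\<Sum>t\<in>S. (\<lambda>i. c t * t i)) i = (\<Sum>t\<in>S. (if t = s then s i else 0) + (if t = s' then - s' i else 0))"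
      unfolding sum_fun_apply c_def using s(3) by (intro sum.cong) auto
    also have "\<dots> = s i - s' i" using S(1) s by (simp add: sum.distrib)
    finally show "(\<Sum>t\<in>S. (\<lambda>i. c t * t i)) i = s i - s' i" .
  qed
  moreover have "\<forall>t\<in>S. av (\<iota> (c t)) \<le> 1"
    by (simp add: c_def absK_def[symmetric])
  ultimately have "\<forall>t\<in>S. av (\<iota> (c t)) < 1"
    using S(2) diff unfolding red_indep_def by simp
  hence "av (\<iota> (c s)) < 1" using s(1) by blast
  thus False by (simp add: c_def absK_def[symmetric])
qed

lemma red_indep_card_bounded:
  "\<exists>N. \<forall>S. finite S \<and> S \<subseteq> Lam \<iota> av d \<and> red_indep \<iota> av piK d S \<longrightarrow> card S \<le> N"
proof -
  obtain R and \<rho> :: "(nat \<Rightarrow> 'k) \<Rightarrow> (nat \<Rightarrow> 'k)" where R: "finite R" "\<rho> ` Lam \<iota> av d \<subseteq> R"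
    and \<rho>: "\<And>s s'. s \<in> Lam \<iota> av d \<Longrightarrow> s' \<in> Lam \<iota> av d \<Longrightarrow> \<rho> s = \<rho> s' \<Longrightarrow>
      (\<lambda>i. s i - s' i) \<in> piLam \<iota> av piK d 1"
    using finite_reduction_map by blast
  have "card S \<le> card R" if S: "finite S" "S \<subseteq> Lam \<iota> av d" "red_indep \<iota> av piK d S" for S
  proof (rule card_inj_on_le[OF _ _ R(1)])
    show "inj_on \<rho> S"
    proof (rule inj_onI, rule ccontr)
      fix s s' assume "s \<in> S" "s' \<in> S" "\<rho> s = \<rho> s'" "s \<noteq> s'"
      thus False using \<rho> red_indep_diff_not_mem_piLam_1[OF S(1,3)] S(2) by blast
    qed
    show "\<rho> ` S \<subseteq> R" using R(2) S(2) by blast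
  qed
  thus ?thesis by blast
qed

lemma red_indep_singleton:
  assumes s: "s \<in> Lam \<iota> av d" "s \<notin> piLam \<iota> av piK d 1"
  shows "red_indep \<iota> av piK d {s}"
  unfolding red_indep_def
proof (intro allI impI ballI)
  fix c t assume c: "\<forall>t\<in>{s}. av (\<iota> (c t)) \<le> 1" and sum: "(\<Sum>t\<in>{s}. (\<lambda>i. c t * t i)) \<in> piLam \<iota> av piK d 1"
    and t: "t \<in> {s}"
  show "av (\<iota> (c t)) < 1"
  proof (rule ccontr)
    assume "\<not> av (\<iota> (c t)) < 1"
    hence c1: "absK (c s) = 1" using c t by (simp add: absK_def)
    hence "c s \<noteq> 0" by auto
    have "(\<lambda>i. c s * s i / piK) \<in> Lam \<iota> av d" using sum by (simp add: piLam_iff)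
    hence "(\<lambda>i. inverse (c s) * (c s * s i / piK)) \<in> Lam \<iota> av d"
      using OK_submodule_smult[OF OK_submodule_Lam, of "inverse (c s)" "\<lambda>i. c s * s i / piK"] c1
      by (simp add: nonarch_abs_inverse[OF nonarch_absK] del: times_divide_eq_right)
    hence "s \<in> piLam \<iota> av piK d 1" using \<open>c s \<noteq> 0\<close> by (simp add: piLam_iff mult.assoc[symmetric])
    thus False using s(2) by blast
  qed
qed

lemma rk_ge_1:
  assumes M: "M \<subseteq> Lam \<iota> av d" and s: "s \<in> M" "s \<notin> piLam \<iota> av piK d 1"
  shows "rk \<iota> av piK d M \<ge> 1"
proof -
  obtain N where N: "\<forall>S. finite S \<and> S \<subseteq> Lam \<iota> av d \<and> red_indep \<iota> av piK d S \<longrightarrow> card S \<le> N"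
    using red_indep_card_bounded by blast
  let ?A = "{card S | S. finite S \<and> S \<subseteq> M \<and> red_indep \<iota> av piK d S}"
  have "finite ?A"
    by (rule finite_subset[of _ "{..N}"]) (use N M in auto)
  moreover have "card {s} \<in> ?A" using s M red_indep_singleton by blast
  ultimately have "card {s} \<le> Max ?A" by (rule Max_ge)
  thus ?thesis unfolding rk_def by simp
qed

lemma exists_normalizing_scalar:
  assumes x: "\<forall>i>d. x i = 0" "x \<noteq> 0"
  obtains l i0 where "l * x i0 = 1" "\<forall>i. av (l * x i) \<le> 1"
proof -
  obtain i0 where i0: "i0 \<le> d" "\<forall>i\<le>d. av (x i) \<le> av (x i0)"
  proof -
    have "Max ((\<lambda>i. av (x i)) ` {..d}) \<in> (\<lambda>i. av (x i)) ` {..d}" by (intro Max_in) auto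
    then obtain i0 where "Max ((\<lambda>i. av (x i)) ` {..d}) = av (x i0)" "i0 \<in> {..d}" by (rule imageE)
    moreover have "\<forall>i\<le>d. av (x i) \<le> Max ((\<lambda>i. av (x i)) ` {..d})" by simp
    ultimately show ?thesis using that by auto
  qed
  obtain j where "x j \<noteq> 0" using x(2) by (auto simp: fun_eq_iff)
  hence "0 < av (x j)" "j \<le> d" using x(1) nonarch_abs_pos[OF nonarch_av] by (auto simp: not_le[symmetric])
  hence pos: "0 < av (x i0)" using i0(2) by (meson less_le_trans)
  hence "x i0 \<noteq> 0" using nonarch_abs_0[OF nonarch_av] by auto
  moreover have "av (inverse (x i0) * x i) \<le> 1" for i
  proof (cases "i \<le> d")
    case True
    have "av (inverse (x i0) * x i) = av (x i) / av (x i0)"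
      by (simp add: nonarch_abs_mult[OF nonarch_av] nonarch_abs_inverse[OF nonarch_av] divide_inverse)
    thus ?thesis using i0(2) True pos by simp
  qed (use x(1) nonarch_abs_0[OF nonarch_av] in simp)
  ultimately show ?thesis using that[of "inverse (x i0)" i0] by simp
qed

text \<open>Scale \<open>x\<close> so that a coordinate becomes \<open>1\<close>; its approximation in the \<open>O\<close>-span of \<open>M\<close> then
  cannot have all coordinates in \<open>\<pi>O\<close>.\<close>

lemma in_Y_not_subset_piLam_1:
  assumes n: "n \<ge> 1" and x: "\<forall>i>d. x i = 0" "x \<noteq> 0" and Y: "in_Y \<iota> av piK n x M"
  shows "\<exists>s\<in>M. s \<notin> piLam \<iota> av piK d 1"
proof (rule ccontr)
  assume "\<not> (\<exists>s\<in>M. s \<notin> piLam \<iota> av piK d 1)"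
  hence small: "\<forall>s\<in>M. \<forall>i. av (\<iota> (s i)) \<le> q"
    using q_pos by (auto simp: piLam_iff Lam_iff absK_divide absK_def[symmetric] pos_divide_le_eq)
  obtain l i0 where l: "l * x i0 = 1" "\<forall>i. av (l * x i) \<le> 1"
    using exists_normalizing_scalar[OF x] .
  obtain w where w: "w \<in> O_span \<iota> av M" "\<forall>i. av (l * x i - w i) \<le> q ^ n"
    using Y l(2) unfolding in_Y_def absK_def by blast
  obtain F c where F: "F \<subseteq> M" "\<forall>s\<in>F. av (c s) \<le> 1" "w = (\<Sum>s\<in>F. (\<lambda>i. c s * \<iota> (s i)))"
    using w(1) unfolding O_span_def by blast
  have "av (c s * \<iota> (s i0)) \<le> q" if "s \<in> F" for s
  proof -
    have "av (c s) * av (\<iota> (s i0)) \<le> av (\<iota> (s i0))"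
      using F(2) that by (intro mult_left_le_one_le) (simp_all add: nonarch_abs_nonneg[OF nonarch_av])
    also have "\<dots> \<le> q" using small F(1) that by blast
    finally show ?thesis by (simp add: nonarch_abs_mult[OF nonarch_av])
  qed
  hence "av (w i0) \<le> q"
    using q_pos by (simp add: F(3) sum_fun_apply nonarch_abs_sum_le[OF nonarch_av])
  moreover have "av (1 - w i0) \<le> q"
    using w(2) l(1) power_decreasing[OF n, of q] q_pos q_less_1 by (metis less_imp_le order_trans power_one_right)
  ultimately have "av ((1 - w i0) + w i0) \<le> q" by (rule nonarch_abs_add_le[OF nonarch_av, rotated])
  thus False using nonarch_abs_1[OF nonarch_av] q_less_1 by simp
qed

lemma lattice_mod_0: "lattice_mod \<iota> av piK d 0 M \<Longrightarrow> M = Lam \<iota> av d"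
  using piK_nonzero by (auto simp: lattice_mod_iff piLam_iff)

lemma Tpos_in_Y_Int:
  assumes x: "\<forall>i>d. x i = 0" "x \<noteq> 0"
    and U: "U \<in> Tpos \<iota> av piK d n" "in_Y \<iota> av piK n x U"
    and V: "V \<in> Tpos \<iota> av piK d n" "in_Y \<iota> av piK n x V"
  shows "U \<inter> V \<in> Tpos \<iota> av piK d n \<and> in_Y \<iota> av piK n x (U \<inter> V)"
proof (cases "n = 0")
  case True
  hence "U = Lam \<iota> av d" "V = Lam \<iota> av d" using U(1) V(1) lattice_mod_0 by (simp_all add: Tpos_def)
  thus ?thesis using U by simp
next
  case False
  have LU: "lattice_mod \<iota> av piK d n U" and LV: "lattice_mod \<iota> av piK d n V"
    using U(1) V(1) by (simp_all add: Tpos_def)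
  have L: "lattice_mod \<iota> av piK d n (U \<inter> V)" by (rule lattice_mod_Int[OF LU LV])
  have Y: "in_Y \<iota> av piK n x (U \<inter> V)" by (rule in_Y_Int[OF LU LV x(1) U(2) V(2)])
  have "rk' \<iota> av piK d n (U \<inter> V) \<le> rk' \<iota> av piK d n U" by (rule rk'_mono[OF LU L]) blast
  hence "rk' \<iota> av piK d n (U \<inter> V) \<le> d" using U(1) by (simp add: Tpos_def)
  moreover obtain s where "s \<in> U \<inter> V" "s \<notin> piLam \<iota> av piK d 1"
    using in_Y_not_subset_piLam_1[OF _ x Y] False by auto
  hence "rk \<iota> av piK d (U \<inter> V) \<ge> 1" using L rk_ge_1 by (auto simp: lattice_mod_iff)
  ultimately show ?thesis using L Y by (simp add: Tpos_def)
qed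

end

theorem mainTheorem13:
  fixes \<iota> :: "'k::field_char_0 \<Rightarrow> 'c::field" and av :: "'c \<Rightarrow> real" and piK :: 'k
    and d n :: nat and x :: "nat \<Rightarrow> 'c"
  assumes "nonarch_abs av" and "field_hom \<iota>"
    and "p_adic_local_field \<iota> av piK" and "is_Cp \<iota> av"
    and "\<forall>i>d. x i = 0" and "x \<noteq> 0"
    and "{M \<in> Tpos \<iota> av piK d n. in_Y \<iota> av piK n x M} \<noteq> {}"
  shows "contractible_space (order_complex_top {M \<in> Tpos \<iota> av piK d n. in_Y \<iota> av piK n x M})"
proof -
  interpret local_field_lattices \<iota> av piK d
    using assms(1-3) by unfold_locales
  define C where "C = {M \<in> Tpos \<iota> av piK d n. in_Y \<iota> av piK n x M}"
  have Int_closed: "U \<inter> V \<in> C" if "U \<in> C" "V \<in> C" for U V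
    using Tpos_in_Y_Int[OF assms(5,6)] that unfolding C_def by blast
  show ?thesis
  proof (cases "finite C")
    case False
    thus ?thesis unfolding C_def by (rule contractible_order_complex_infinite)
  next
    case True
    obtain m where m: "m \<in> C" "\<forall>U\<in>C. U \<subseteq> m \<longrightarrow> m = U"
      using finite_has_minimal[OF True] assms(7) unfolding C_def by blast
    have "\<forall>U\<in>C. m \<subseteq> U" using Int_closed m by (metis Int_lower1 Int_lower2)
    thus ?thesis using contractible_order_complex_least[OF True m(1)] unfolding C_def by blast
  qed
qed

end
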